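(* Let $\mathbf{X}\subseteq\mathbb{R}^d$ and fix a time step $k$. Assume: (i) the posterior multi-target process $\Phi_{k-1}$ is an i.i.d. process with cardinality distribution $\rho_{k-1}$ and spatial (probability) distribution $s_{k-1}$, hence with intensity measure $\mu_{k-1}(\cdot)=\big(\sum_{m\ge 0} m\rho_{k-1}(m)\big)s_{k-1}(\cdot)$; (ii) the predicted process is $\Phi_{k|k-1}=\bigcup_{x\in\Phi_{k-1}}\big(\Phi_{\mathrm{s}}(x)\cup\Phi_{\mathrm{b}}(x)\big)$, where, conditionally on $\Phi_{k-1}$, all the processes $\Phi_{\mathrm{s}}(x),\Phi_{\mathrm{b}}(x)$ ($x\in\Phi_{k-1}$) are mutually independent; equivalently the PGFL of $\Phi_{k|k-1}$ is $G_{k|k-1}(h)=G_{k-1}\big(G_{\mathrm{s}}(h|\cdot)\,G_{\mathrm{b}}(h|\cdot)\big)$; (iii) the survival process $\Phi_{\mathrm{s}}(x)$ is a Bernoulli process with parameter $p_{\mathrm{s},k}(x)$ and spatial distribution given by a Markov kernel $f_{\mathrm{s},k}(\cdot|x)$; (iv) there is no spontaneous birth; (v) the spawning process $\Phi_{\mathrm{b}}(x)$ is a Poisson process with rate $\lambda_{\mathrm{b},k}(x)\ge 0$ and spatial distribution given by a Markov kernel $s_{\mathrm{b},k}(\cdot|x)$. Write $\bar p_{\mathrm{s},k}=1-p_{\mathrm{s},k}$. Then the intensity measure of $\Phi_{k|k-1}$ is $$\mu_{k|k-1}(B)=\int\big[p_{\mathrm{s},k}(x)f_{\mathrm{s},k}(B|x)+\lambda_{\mathrm{b},k}(x)s_{\mathrm{b},k}(B|x)\big]\mu_{k-1}(\mathrm{d}x)$$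 for every Borel $B\subseteq\mathbf{X}$, and its cardinality distribution is, for every $n\ge 0$, $$\rho_{k|k-1}(n)=\sum_{j=0}^{n}B_{n,j}(b_1,\ldots,b_{n})\sum_{m\ge j}\frac{m!}{n!\,(m-j)!}\rho_{k-1}(m)\,b_0^{\,m-j},$$ where $b_0=\int \bar p_{\mathrm{s},k}(x)e^{-\lambda_{\mathrm{b},k}(x)}\,s_{k-1}(\mathrm{d}x)$ and, for $i\ge1$, $$b_i=\int \lambda_{\mathrm{b},k}(x)^{i-1}e^{-\lambda_{\mathrm{b},k}(x)}\big[\bar p_{\mathrm{s},k}(x)\lambda_{\mathrm{b},k}(x)+i\,p_{\mathrm{s},k}(x)\big]s_{k-1}(\mathrm{d}x).$$
   Context: A point process on $\mathbf{X}$ is a random finite collection of points of $\mathbf{X}$ (all point processes here are simple). Its cardinality distribution $\rho(n)$ is the probability that it has exactly $n$ points; its intensity measure is $\mu(B)=\mathbb{E}[\text{number of points in }B]$. Its probability generating functional (PGFL) is $G(h)=\mathbb{E}\big[\prod_{x\in\Phi}h(x)\big]$ for measurable $h:\mathbf{X}\to\mathbb{R}$ with $\|h\|_\infty\le 1$. An i.i.d. process with cardinality distribution $\rho$ and spatial probability distribution $s$ has $n$ points with probability $\rho(n)$, the points being i.i.d. with law $s$ given $n$. A Bernoulli process with parameter $p\in[0,1]$ and spatial distribution $s$ is empty with probability $1-p$ and otherwise consists of a single point with law $s$. A Poisson process with rate $\lambda\ge0$ and spatial distribution $s$ is an i.i.d. process whose cardinality distribution is Poisson with mean $\lambda$; its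 PGFL is $\exp[\lambda(\int h\,\mathrm{d}s-1)]$. The partial Bell polynomial is $$B_{n,j}(x_1,\ldots,x_n)=\sum\frac{n!}{k_1!(1!)^{k_1}k_2!(2!)^{k_2}\cdots k_n!(n!)^{k_n}}x_1^{k_1}\cdots x_n^{k_n},$$ the sum over nonnegative integers $k_1,\ldots,k_n$ with $k_1+2k_2+\cdots+nk_n=n$ and $k_1+\cdots+k_n=j$; by convention $B_{0,0}=1$ and $B_{n,0}=0$ for $n\ge1$. *)

theory Defs
  imports "HOL-Probability.Probability"
begin

text \<open>Finite point configurations on a measurable space M are represented as finite lists of
points of space M (points counted with multiplicity).  The sigma-algebra on lists is the
finest one making every map (x_0,...,x_{n-1}) to the list [x_0,...,x_{n-1}] measurable
from the n-fold product of M, i.e. the disjoint-union sigma-algebra of the products M^n.\<close>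

definition listM :: "'a measure \<Rightarrow> 'a list measure" where
  "listM M = measure_of (lists (space M))
     {A. A \<subseteq> lists (space M) \<and>
         (\<forall>n. (\<lambda>f. map f [0..<n]) -` A \<inter> space (PiM {..<n} (\<lambda>_. M)) \<in> sets (PiM {..<n} (\<lambda>_. M)))}
     (\<lambda>_. 0)"

definition iid_pp :: "'a measure \<Rightarrow> nat measure \<Rightarrow> 'a measure \<Rightarrow> 'a list measure" where
  "iid_pp M N s = N \<bind> (\<lambda>n. distr (PiM {..<n} (\<lambda>_. s)) (listM M) (\<lambda>f. map f [0..<n]))"

definition poisson_card :: "real \<Rightarrow> nat measure" where
  "poisson_card lam = density (count_space UNIV) (\<lambda>k. ennreal (lam ^ k / fact k * exp (- lam)))"

definition poisson_pp :: "'a measure \<Rightarrow> real \<Rightarrow> 'a measure \<Rightarrow> 'a list measure" where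
  "poisson_pp M lam s = iid_pp M (poisson_card lam) s"

definition bernoulli_pp :: "'a measure \<Rightarrow> real \<Rightarrow> 'a measure \<Rightarrow> 'a list measure" where
  "bernoulli_pp M p s = measure_pmf (bernoulli_pmf p) \<bind>
     (\<lambda>b. if b then distr s (listM M) (\<lambda>y. [y]) else return (listM M) [])"

definition superpose :: "'a measure \<Rightarrow> 'a list measure \<Rightarrow> 'a list measure \<Rightarrow> 'a list measure" where
  "superpose M P Q = distr (P \<Otimes>\<^sub>M Q) (listM M) (\<lambda>(a, b). a @ b)"

definition superpose_list :: "'a measure \<Rightarrow> 'a list measure list \<Rightarrow> 'a list measure" where
  "superpose_list M Ps = foldr (superpose M) Ps (return (listM M) [])"

definition predicted_pp ::
  "'a measure \<Rightarrow> ('a \<Rightarrow> real) \<Rightarrow> ('a \<Rightarrow> 'a measure) \<Rightarrow> ('a \<Rightarrow> real) \<Rightarrow> ('a \<Rightarrow> 'a measure)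
    \<Rightarrow> 'a list measure \<Rightarrow> 'a list measure" where
  "predicted_pp M ps fs lb sb Phi = Phi \<bind>
     (\<lambda>xs. superpose_list M
        (map (\<lambda>x. superpose M (bernoulli_pp M (ps x) (fs x)) (poisson_pp M (lb x) (sb x))) xs))"

definition npoints :: "'a set \<Rightarrow> 'a list \<Rightarrow> nat" where
  "npoints B xs = length (filter (\<lambda>y. y \<in> B) xs)"

definition intensity :: "'a measure \<Rightarrow> 'a list measure \<Rightarrow> 'a measure" where
  "intensity M P = measure_of (space M) (sets M) (\<lambda>B. \<integral>\<^sup>+ xs. of_nat (npoints B xs) \<partial>P)"

definition card_dist :: "'a measure \<Rightarrow> 'a list measure \<Rightarrow> nat \<Rightarrow> real" where
  "card_dist M P n = measure P {xs \<in> lists (space M). length xs = n}"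

text \<open>Partial Bell polynomial B_{n,j}(x_1,...,x_n).  The conventions B_{0,0} = 1 and
B_{n,0} = 0 for n \<ge> 1 follow from the definition.\<close>
definition partial_bell :: "nat \<Rightarrow> nat \<Rightarrow> (nat \<Rightarrow> real) \<Rightarrow> real" where
  "partial_bell n j x =
     (\<Sum>k\<in>{k::nat \<Rightarrow> nat. (\<forall>i. i \<notin> {1..n} \<longrightarrow> k i = 0) \<and>
                         (\<Sum>i=1..n. i * k i) = n \<and> (\<Sum>i=1..n. k i) = j}.
        fact n / (\<Prod>i=1..n. fact (k i) * fact i ^ k i) * (\<Prod>i=1..n. x i ^ k i))"

end

(*
  The predicted process is a mixture, over the prior configuration, of superpositions of
  independent per-target offspring processes (a Bernoulli survival process and a Poisson spawning
  process). Expected point counts add under superposition and a target at x has, in B, the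
  expected offspring count p_s(x) f_s(B|x) + lambda_b(x) s_b(B|x); summed over an i.i.d. prior
  configuration this becomes the integral of that count against the prior intensity
  (mean cardinality) * s_{k-1}.

  Cardinality generating functions multiply under superposition. The offspring count of a target
  at x has generating function sum_i w_i(x) z^i / i!, w_i being the integrand of b_i, so averaging
  the product over m i.i.d. targets gives (sum_i b_i z^i / i!)^m. Expanding this power binomially
  around b_0 and using the exponential formula
  [z^n] (sum_{i>=1} b_i z^i / i!)^j = j!/n! B_{n,j}(b_1, ..., b_n)
  yields the cardinality distribution.
*)

theory Submission
  imports Defs "HOL-Library.More_List" "HOL-Computational_Algebra.Formal_Power_Series"
begin

section \<open>Finite point configurations\<close>

abbreviation PiN :: "nat \<Rightarrow> 'a measure \<Rightarrow> (nat \<Rightarrow> 'a) measure" where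
  "PiN n M \<equiv> PiM {..<n} (\<lambda>_. M)"

definition list_sigma_sets :: "'a measure \<Rightarrow> 'a list set set" where
  "list_sigma_sets M = {A. A \<subseteq> lists (space M) \<and>
     (\<forall>n. (\<lambda>f. map f [0..<n]) -` A \<inter> space (PiN n M) \<in> sets (PiN n M))}"

lemma map_upt_in_lists: "f \<in> space (PiN n M) \<Longrightarrow> map f [0..<n] \<in> lists (space M)"
  by (auto simp: space_PiM PiE_iff)

lemma sigma_algebra_list_sigma_sets: "sigma_algebra (lists (space M)) (list_sigma_sets M)"
  unfolding sigma_algebra_iff2
proof (intro conjI ballI allI impI)
  show "list_sigma_sets M \<subseteq> Pow (lists (space M))" "{} \<in> list_sigma_sets M"
    by (auto simp: list_sigma_sets_def)
next
  fix A assume A: "A \<in> list_sigma_sets M"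
  have "(\<lambda>f. map f [0..<n]) -` (lists (space M) - A) \<inter> space (PiN n M)
      = space (PiN n M) - ((\<lambda>f. map f [0..<n]) -` A \<inter> space (PiN n M))" for n
    using map_upt_in_lists[of _ n M] by blast
  then show "lists (space M) - A \<in> list_sigma_sets M"
    using A by (auto simp: list_sigma_sets_def)
next
  fix A :: "nat \<Rightarrow> _" assume A: "range A \<subseteq> list_sigma_sets M"
  have "(\<lambda>f. map f [0..<n]) -` (\<Union>i. A i) \<inter> space (PiN n M)
      = (\<Union>i. (\<lambda>f. map f [0..<n]) -` A i \<inter> space (PiN n M))" for n
    by blast
  moreover have "(\<Union>i. (\<lambda>f. map f [0..<n]) -` A i \<inter> space (PiN n M)) \<in> sets (PiN n M)" for n
    using A by (intro sets.countable_UN) (auto simp: list_sigma_sets_def)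
  moreover have "(\<Union>i. A i) \<subseteq> lists (space M)"
    using A by (force simp: list_sigma_sets_def)
  ultimately show "(\<Union>i. A i) \<in> list_sigma_sets M"
    by (simp add: list_sigma_sets_def)
qed

lemma space_listM [simp]: "space (listM M) = lists (space M)"
  unfolding listM_def by (rule space_measure_of) auto

lemma sets_listM: "sets (listM M) = list_sigma_sets M"
  unfolding listM_def list_sigma_sets_def[symmetric]
  using sigma_algebra.sigma_sets_eq[OF sigma_algebra_list_sigma_sets]
  by (subst sets_measure_of) (auto simp: list_sigma_sets_def)

lemma in_sets_listM: "A \<in> sets (listM M) \<longleftrightarrow> A \<subseteq> lists (space M) \<and>
   (\<forall>n. (\<lambda>f. map f [0..<n]) -` A \<inter> space (PiN n M) \<in> sets (PiN n M))"
  unfolding sets_listM list_sigma_sets_def by simp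

lemma measurable_map_upt_listM [measurable]: "(\<lambda>f. map f [0..<n]) \<in> PiN n M \<rightarrow>\<^sub>M listM M"
  by (rule measurableI) (auto simp: map_upt_in_lists in_sets_listM)

lemma measurable_from_listM:
  assumes "g \<in> lists (space M) \<rightarrow> space N"
    and "\<And>n. (\<lambda>f. g (map f [0..<n])) \<in> PiN n M \<rightarrow>\<^sub>M N"
  shows "g \<in> listM M \<rightarrow>\<^sub>M N"
proof (rule measurableI)
  show "x \<in> space (listM M) \<Longrightarrow> g x \<in> space N" for x using assms(1) by auto
  fix A assume A: "A \<in> sets N"
  have "(\<lambda>f. map f [0..<n]) -` (g -` A \<inter> space (listM M)) \<inter> space (PiN n M)
      = (\<lambda>f. g (map f [0..<n])) -` A \<inter> space (PiN n M)" for n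
    using map_upt_in_lists[of _ n M] by auto
  then show "g -` A \<inter> space (listM M) \<in> sets (listM M)"
    using measurable_sets[OF assms(2) A] by (auto simp: in_sets_listM)
qed

lemma measurable_to_listM:
  assumes d: "d \<in> space M"
    and g: "\<And>y. y \<in> space N \<Longrightarrow> g y \<in> lists (space M)"
    and len: "(\<lambda>y. length (g y)) \<in> N \<rightarrow>\<^sub>M count_space UNIV"
    and nth: "\<And>i. (\<lambda>y. nth_default d (g y) i) \<in> N \<rightarrow>\<^sub>M M"
  shows "g \<in> N \<rightarrow>\<^sub>M listM M"
proof (rule measurableI)
  show "y \<in> space N \<Longrightarrow> g y \<in> space (listM M)" for y using g by auto
  fix A assume A: "A \<in> sets (listM M)"
  define S where "S n = (\<lambda>f. map f [0..<n]) -` A \<inter> space (PiN n M)" for n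
  define entries where "entries n y = restrict (nth_default d (g y)) {..<n}" for n y
  have S: "S n \<in> sets (PiN n M)" for n using A unfolding S_def in_sets_listM by auto
  have map_entries: "map (entries n y) [0..<n] = g y" if "length (g y) = n" for n y
    using that by (intro nth_equalityI) (auto simp: entries_def nth_default_def)
  have "g -` A \<inter> space N = (\<Union>n. {y\<in>space N. length (g y) = n} \<inter> (entries n -` S n \<inter> space N))"
  proof (intro set_eqI iffI)
    fix y assume y: "y \<in> g -` A \<inter> space N"
    have "entries (length (g y)) y \<in> space (PiN (length (g y)) M)"
      using g[of y] y d by (auto simp: space_PiM entries_def nth_default_def)
    with y show "y \<in> (\<Union>n. {y\<in>space N. length (g y) = n} \<inter> (entries n -` S n \<inter> space N))"
      by (auto simp: S_def map_entries)
  qed (auto simp: S_def map_entries)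
  moreover have "{y\<in>space N. length (g y) = n} \<in> sets N" for n
    using len by measurable
  moreover have "entries n \<in> N \<rightarrow>\<^sub>M PiN n M" for n
    unfolding entries_def by (rule measurable_restrict) (rule nth)
  ultimately show "g -` A \<inter> space N \<in> sets N"
    using measurable_sets S by auto
qed

lemma measurable_length_listM [measurable]: "length \<in> listM M \<rightarrow>\<^sub>M count_space UNIV"
  by (rule measurable_from_listM) auto

lemma sets_length_eq_listM [measurable]: "{xs \<in> lists (space M). length xs = n} \<in> sets (listM M)"
proof -
  have "length -` {n} \<inter> space (listM M) \<in> sets (listM M)"
    by (rule measurable_sets[OF measurable_length_listM]) auto
  then show ?thesis by (simp add: vimage_def Int_def conj_commute)
qed

lemma measurable_nth_default_listM [measurable]:
  assumes "d \<in> space M" shows "(\<lambda>xs. nth_default d xs i) \<in> listM M \<rightarrow>\<^sub>M M"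
proof (rule measurable_from_listM)
  show "(\<lambda>xs. nth_default d xs i) \<in> lists (space M) \<rightarrow> space M"
    using assms by (auto simp: nth_default_def)
  have "(\<lambda>f. nth_default d (map f [0..<n]) i) = (\<lambda>f. if i < n then f i else d)" for n
    by (auto simp: nth_default_def)
  then show "(\<lambda>f. nth_default d (map f [0..<n]) i) \<in> PiN n M \<rightarrow>\<^sub>M M" for n
    using assms by (cases "i < n") auto
qed

lemma measurable_append_listM [measurable]:
  assumes "space M \<noteq> {}"
  shows "(\<lambda>(xs, ys). xs @ ys) \<in> listM M \<Otimes>\<^sub>M listM M \<rightarrow>\<^sub>M listM M"
proof -
  obtain d where d: "d \<in> space M" using assms by auto
  have tail: "(\<lambda>y. nth_default d (snd y) (i - length (fst y))) \<in> listM M \<Otimes>\<^sub>M listM M \<rightarrow>\<^sub>M M" for i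
  proof -
    have "(\<lambda>y. (\<lambda>k y. nth_default d (snd y) (i - k)) (length (fst y)) y) \<in> listM M \<Otimes>\<^sub>M listM M \<rightarrow>\<^sub>M M"
      by (rule measurable_compose_countable) (use d in measurable)
    then show ?thesis by simp
  qed
  show ?thesis
  proof (rule measurable_to_listM[OF d])
    fix i
    have "(\<lambda>y. nth_default d (case y of (xs, ys) \<Rightarrow> xs @ ys) i) =
       (\<lambda>y. if i < length (fst y) then nth_default d (fst y) i else nth_default d (snd y) (i - length (fst y)))"
      by (auto simp: nth_default_def nth_append fun_eq_iff)
    then show "(\<lambda>y. nth_default d (case y of (xs, ys) \<Rightarrow> xs @ ys) i) \<in> listM M \<Otimes>\<^sub>M listM M \<rightarrow>\<^sub>M M"
      using d tail by simp
  qed (auto simp: space_pair_measure case_prod_beta)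
qed

lemma measurable_singleton_listM [measurable]: "(\<lambda>y. [y]) \<in> M \<rightarrow>\<^sub>M listM M"
proof (cases "space M = {}")
  case False
  then obtain d where d: "d \<in> space M" by auto
  have "(\<lambda>y. nth_default d [y] i) = (\<lambda>y. if i = 0 then y else d)" for i
    by (auto simp: nth_default_def)
  with d show ?thesis by (intro measurable_to_listM[OF d]) auto
qed (intro measurableI, auto)

lemma measurable_sum_list_listM [measurable]:
  assumes "g \<in> borel_measurable M"
  shows "(\<lambda>xs. \<Sum>x\<leftarrow>xs. g x :: ennreal) \<in> borel_measurable (listM M)"
proof (rule measurable_from_listM)
  have "(\<lambda>f. \<Sum>x\<leftarrow>map f [0..<n]. g x) = (\<lambda>f. \<Sum>i<n. g (f i))" for n
    by (simp add: interv_sum_list_conv_sum_set_nat comp_def atLeast0LessThan)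
  then show "(\<lambda>f. \<Sum>x\<leftarrow>map f [0..<n]. g x) \<in> borel_measurable (PiN n M)" for n
    using assms by simp
qed auto

lemma npoints_append: "npoints B (xs @ ys) = npoints B xs + npoints B ys"
  by (simp add: npoints_def)

lemma npoints_eq_sum_list: "(of_nat (npoints B xs) :: ennreal) = (\<Sum>x\<leftarrow>xs. indicator B x)"
  by (induction xs) (auto simp: npoints_def indicator_def)

lemma measurable_npoints [measurable]:
  assumes "B \<in> sets M"
  shows "(\<lambda>xs. of_nat (npoints B xs) :: ennreal) \<in> borel_measurable (listM M)"
  unfolding npoints_eq_sum_list using assms by measurable

section \<open>I.i.d. configurations of fixed size\<close>

lemma prob_algebraD:
  assumes "P \<in> space (prob_algebra N)" shows "prob_space P" "sets P = sets N"
  using assms by (auto simp: space_prob_algebra)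

lemma space_nonempty_of_prob_algebra: "s \<in> space (prob_algebra M) \<Longrightarrow> space M \<noteq> {}"
  using prob_space.not_empty sets_eq_imp_space_eq by (metis prob_algebraD)

lemma return_Nil_in_prob_algebra: "return (listM M) [] \<in> space (prob_algebra (listM M))"
  by (auto simp: space_prob_algebra intro!: prob_space_return)

lemma measurable_snoc_listM [measurable]:
  assumes "space M \<noteq> {}"
  shows "(\<lambda>(y, xs). xs @ [y]) \<in> M \<Otimes>\<^sub>M listM M \<rightarrow>\<^sub>M listM M"
proof -
  have "(\<lambda>p. (snd p, [fst p])) \<in> M \<Otimes>\<^sub>M listM M \<rightarrow>\<^sub>M listM M \<Otimes>\<^sub>M listM M" by measurable
  from measurable_comp[OF this measurable_append_listM[OF assms]] show ?thesis
    by (simp add: comp_def case_prod_beta)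
qed

text \<open>The law of n i.i.d. points, built by appending one point at a time so that integrals
  against it unfold by Fubini; distr_PiM_eq_iid_config relates it to the product measure.\<close>

fun iid_config :: "'a measure \<Rightarrow> nat \<Rightarrow> 'a measure \<Rightarrow> 'a list measure" where
  "iid_config M 0 s = return (listM M) []"
| "iid_config M (Suc n) s = distr (s \<Otimes>\<^sub>M iid_config M n s) (listM M) (\<lambda>(y, xs). xs @ [y])"

lemma sets_iid_config [simp, measurable_cong]: "sets (iid_config M n s) = sets (listM M)"
  by (cases n) auto

lemma measurable_iid_config:
  assumes K: "K \<in> N \<rightarrow>\<^sub>M prob_algebra M" and ne: "space M \<noteq> {}"
  shows "(\<lambda>x. iid_config M n (K x)) \<in> N \<rightarrow>\<^sub>M prob_algebra (listM M)"
proof (induction n)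
  case 0
  then show ?case using return_Nil_in_prob_algebra by simp
next
  case (Suc n)
  have "(\<lambda>x. K x \<Otimes>\<^sub>M iid_config M n (K x)) \<in> N \<rightarrow>\<^sub>M prob_algebra (M \<Otimes>\<^sub>M listM M)"
    by (rule measurable_pair_prob[OF K Suc.IH])
  then have "(\<lambda>x. distr (K x \<Otimes>\<^sub>M iid_config M n (K x)) (listM M) (\<lambda>(y, xs). xs @ [y]))
      \<in> N \<rightarrow>\<^sub>M prob_algebra (listM M)"
    by (rule measurable_distr_prob_space2) (use measurable_snoc_listM[OF ne] in measurable)
  then show ?case by simp
qed

lemma iid_config_in_prob_algebra:
  assumes "s \<in> space (prob_algebra M)"
  shows "iid_config M n s \<in> space (prob_algebra (listM M))"
  using measurable_space[OF measurable_iid_config[OF measurable_const[OF assms, where M="count_space UNIV"]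
      space_nonempty_of_prob_algebra[OF assms]]]
  by simp

lemma distr_PiM_eq_iid_config:
  assumes s: "s \<in> space (prob_algebra M)"
  shows "distr (PiN n s) (listM M) (\<lambda>f. map f [0..<n]) = iid_config M n s"
proof (induction n)
  case 0
  interpret prob_space "PiN 0 s" using prob_algebraD[OF s] by (intro prob_space_PiM) auto
  show ?case using distr_const[of "[]" "listM M"] by simp
next
  case (Suc n)
  have ne: "space M \<noteq> {}" using space_nonempty_of_prob_algebra[OF s] .
  have sets_PiN: "sets (PiN m s) = sets (PiN m M)" for m
    using prob_algebraD[OF s] by (intro sets_PiM_cong) auto
  have map_upt: "(\<lambda>f. map f [0..<m]) \<in> PiN m s \<rightarrow>\<^sub>M listM M" for m
    using measurable_map_upt_listM[of m M] sets_PiN[of m] by (simp cong: measurable_cong_sets)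
  have snoc: "(\<lambda>(y, xs). xs @ [y]) \<in> s \<Otimes>\<^sub>M listM M \<rightarrow>\<^sub>M listM M"
    using measurable_snoc_listM[OF ne] prob_algebraD[OF s] by (simp cong: measurable_cong_sets)
  have insert_n: "insert n {..<n} = {..<Suc n}" by auto
  have add_dim: "distr (s \<Otimes>\<^sub>M PiN n s) (PiN (Suc n) s) (\<lambda>(x, X). X(n := x)) = PiN (Suc n) s"
    using distr_pair_PiM_eq_PiM[where I="{..<n}" and i'=n and M="\<lambda>_. s"] prob_algebraD[OF s]
    unfolding insert_n by auto
  have add_dim_meas: "(\<lambda>(x, X). X(n := x)) \<in> s \<Otimes>\<^sub>M PiN n s \<rightarrow>\<^sub>M PiN (Suc n) s"
    unfolding insert_n[symmetric] by measurable
  interpret P: prob_space "PiN n s" using prob_algebraD[OF s] by (intro prob_space_PiM) auto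
  have "distr (PiN (Suc n) s) (listM M) (\<lambda>f. map f [0..<Suc n])
      = distr (s \<Otimes>\<^sub>M PiN n s) (listM M) ((\<lambda>f. map f [0..<Suc n]) \<circ> (\<lambda>(x, X). X(n := x)))"
    by (subst add_dim[symmetric], rule distr_distr[OF map_upt add_dim_meas])
  also have "(\<lambda>f. map f [0..<Suc n]) \<circ> (\<lambda>(x, X). X(n := x))
      = (\<lambda>(y, xs). xs @ [y]) \<circ> (\<lambda>(x, X). (x, map X [0..<n]))"
    by (auto simp: fun_eq_iff)
  also have "distr (s \<Otimes>\<^sub>M PiN n s) (listM M) \<dots> =
      distr (distr (s \<Otimes>\<^sub>M PiN n s) (s \<Otimes>\<^sub>M listM M) (\<lambda>(x, X). (x, map X [0..<n])))
        (listM M) (\<lambda>(y, xs). xs @ [y])"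
    by (rule distr_distr[symmetric, OF snoc]) (use map_upt[of n] in measurable)
  also have "distr (s \<Otimes>\<^sub>M PiN n s) (s \<Otimes>\<^sub>M listM M) (\<lambda>(x, X). (x, map X [0..<n])) =
        distr s s (\<lambda>x. x) \<Otimes>\<^sub>M distr (PiN n s) (listM M) (\<lambda>f. map f [0..<n])"
    using P.prob_space_distr[OF map_upt[of n]]
    by (intro pair_measure_distr[symmetric]) (auto simp: prob_space_imp_sigma_finite map_upt)
  finally show ?case using Suc by simp
qed

lemma nn_integral_iid_config_Suc:
  assumes s: "s \<in> space (prob_algebra M)" and h: "h \<in> borel_measurable (listM M)"
  shows "(\<integral>\<^sup>+xs. h xs \<partial>iid_config M (Suc n) s) = (\<integral>\<^sup>+y. \<integral>\<^sup>+xs. h (xs @ [y]) \<partial>iid_config M n s \<partial>s)"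
proof -
  have snoc: "(\<lambda>(y, xs). xs @ [y]) \<in> s \<Otimes>\<^sub>M iid_config M n s \<rightarrow>\<^sub>M listM M"
    using measurable_snoc_listM[OF space_nonempty_of_prob_algebra[OF s]] prob_algebraD[OF s]
    by (simp cong: measurable_cong_sets)
  interpret L: sigma_finite_measure "iid_config M n s"
    using prob_algebraD[OF iid_config_in_prob_algebra[OF s]] by (simp add: prob_space_imp_sigma_finite)
  have "(\<integral>\<^sup>+xs. h xs \<partial>iid_config M (Suc n) s) = (\<integral>\<^sup>+z. h (case z of (y, xs) \<Rightarrow> xs @ [y]) \<partial>(s \<Otimes>\<^sub>M iid_config M n s))"
    by simp (rule nn_integral_distr[OF snoc], use h in \<open>simp cong: measurable_cong_sets\<close>)
  also have "\<dots> = (\<integral>\<^sup>+y. \<integral>\<^sup>+xs. h (xs @ [y]) \<partial>iid_config M n s \<partial>s)"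
    using L.nn_integral_fst[OF measurable_compose[OF snoc h]] by simp
  finally show ?thesis .
qed

lemma nn_integral_sum_list_iid_config:
  assumes s: "s \<in> space (prob_algebra M)" and g: "g \<in> borel_measurable M"
  shows "(\<integral>\<^sup>+xs. (\<Sum>x\<leftarrow>xs. g x) \<partial>iid_config M n s) = of_nat n * (\<integral>\<^sup>+x. g x \<partial>s)"
proof (induction n)
  case 0
  show ?case using g by (simp add: nn_integral_return)
next
  case (Suc n)
  have g_s: "g \<in> borel_measurable s" using g prob_algebraD[OF s] by (simp cong: measurable_cong_sets)
  note prob_L = prob_algebraD(1)[OF iid_config_in_prob_algebra[OF s, of n]]
  have "(\<integral>\<^sup>+xs. (\<Sum>x\<leftarrow>xs. g x) \<partial>iid_config M (Suc n) s)
      = (\<integral>\<^sup>+y. \<integral>\<^sup>+xs. (\<Sum>x\<leftarrow>xs. g x) + g y \<partial>iid_config M n s \<partial>s)"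
    by (subst nn_integral_iid_config_Suc[OF s]) (use g in simp_all)
  also have "\<dots> = (\<integral>\<^sup>+y. of_nat n * (\<integral>\<^sup>+x. g x \<partial>s) + g y \<partial>s)"
    using prob_space.emeasure_space_1[OF prob_L] g Suc
    by (intro nn_integral_cong) (simp add: nn_integral_add)
  also have "\<dots> = of_nat (Suc n) * (\<integral>\<^sup>+x. g x \<partial>s)"
    using prob_space.emeasure_space_1[OF prob_algebraD(1)[OF s]] g_s
    by (simp add: nn_integral_add distrib_right)
  finally show ?case .
qed

lemma nn_integral_npoints_iid_config:
  assumes s: "s \<in> space (prob_algebra M)" and B: "B \<in> sets M"
  shows "(\<integral>\<^sup>+xs. of_nat (npoints B xs) \<partial>iid_config M n s) = of_nat n * emeasure s B"
  using nn_integral_sum_list_iid_config[OF s, of "indicator B" n] B prob_algebraD[OF s]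
  by (simp add: npoints_eq_sum_list)

lemma iid_pp_eq_bind_iid_config:
  assumes "s \<in> space (prob_algebra M)"
  shows "iid_pp M N s = N \<bind> (\<lambda>n. iid_config M n s)"
  unfolding iid_pp_def using distr_PiM_eq_iid_config[OF assms] by simp

lemma measurable_iid_config_from_discrete:
  assumes "s \<in> space (prob_algebra M)"
    and "sets N = UNIV"
  shows "(\<lambda>n. iid_config M n s) \<in> N \<rightarrow>\<^sub>M prob_algebra (listM M)"
  using iid_config_in_prob_algebra[OF assms(1)] assms(2) by (auto simp: measurable_def)

section \<open>Cardinality generating functions and superposition\<close>

definition card_prob :: "'a measure \<Rightarrow> 'a list measure \<Rightarrow> nat \<Rightarrow> ennreal" where
  "card_prob M P n = emeasure P {xs \<in> lists (space M). length xs = n}"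

definition card_fps :: "'a measure \<Rightarrow> 'a list measure \<Rightarrow> ennreal fps" where
  "card_fps M P = Abs_fps (card_prob M P)"

lemma fps_nth_card_fps [simp]: "fps_nth (card_fps M P) n = card_prob M P n"
  by (simp add: card_fps_def)

lemma card_prob_le_1: "P \<in> space (prob_algebra (listM M)) \<Longrightarrow> card_prob M P n \<le> 1"
  unfolding card_prob_def by (auto dest: prob_algebraD(1) intro: prob_space.emeasure_le_1)

lemma card_prob_iid_config:
  assumes s: "s \<in> space (prob_algebra M)"
  shows "card_prob M (iid_config M k s) n = (if n = k then 1 else 0)"
proof -
  interpret P: prob_space "PiN k s" using prob_algebraD[OF s] by (intro prob_space_PiM) auto
  have sets_PiN: "sets (PiN k s) = sets (PiN k M)" using prob_algebraD[OF s] by (intro sets_PiM_cong) auto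
  have map_upt: "(\<lambda>f. map f [0..<k]) \<in> PiN k s \<rightarrow>\<^sub>M listM M"
    using measurable_map_upt_listM[of k M] sets_PiN by (simp cong: measurable_cong_sets)
  have "(\<lambda>f. map f [0..<k]) -` {xs \<in> lists (space M). length xs = n} \<inter> space (PiN k s)
      = (if n = k then space (PiN k s) else {})"
    using map_upt_in_lists[of _ k M] sets_eq_imp_space_eq[OF sets_PiN] by auto
  then show ?thesis
    unfolding card_prob_def distr_PiM_eq_iid_config[OF s, symmetric]
    by (simp add: emeasure_distr[OF map_upt sets_length_eq_listM] P.emeasure_space_1)
qed

lemma measurable_superpose:
  assumes P: "P \<in> N \<rightarrow>\<^sub>M prob_algebra (listM M)" and Q: "Q \<in> N \<rightarrow>\<^sub>M prob_algebra (listM M)"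
    and ne: "space M \<noteq> {}"
  shows "(\<lambda>x. superpose M (P x) (Q x)) \<in> N \<rightarrow>\<^sub>M prob_algebra (listM M)"
  unfolding superpose_def
  using measurable_comp[OF measurable_pair_prob[OF P Q]
       measurable_distr_prob_space[OF measurable_append_listM[OF ne]]]
  by (simp add: comp_def)

lemma superpose_in_prob_algebra:
  assumes "P \<in> space (prob_algebra (listM M))" "Q \<in> space (prob_algebra (listM M))" "space M \<noteq> {}"
  shows "superpose M P Q \<in> space (prob_algebra (listM M))"
  using measurable_space[OF measurable_superpose[of "\<lambda>_. P" "count_space UNIV" M "\<lambda>_. Q"]] assms
  by auto

lemma superpose_list_in_prob_algebra:
  assumes "set Ps \<subseteq> space (prob_algebra (listM M))" "space M \<noteq> {}"
  shows "superpose_list M Ps \<in> space (prob_algebra (listM M))"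
  using assms unfolding superpose_list_def
  by (induction Ps) (auto intro!: superpose_in_prob_algebra return_Nil_in_prob_algebra)

lemma superpose_list_Cons: "superpose_list M (P # Ps) = superpose M P (superpose_list M Ps)"
  by (simp add: superpose_list_def)

lemma measurable_superpose_list:
  assumes K: "K \<in> M \<rightarrow>\<^sub>M prob_algebra (listM M)" and ne: "space M \<noteq> {}"
  shows "(\<lambda>xs. superpose_list M (map K xs)) \<in> listM M \<rightarrow>\<^sub>M prob_algebra (listM M)"
proof (rule measurable_from_listM)
  show "(\<lambda>xs. superpose_list M (map K xs)) \<in> lists (space M) \<rightarrow> space (prob_algebra (listM M))"
    using measurable_space[OF K] ne by (auto intro!: superpose_list_in_prob_algebra)
  fix n
  have "set is \<subseteq> {..<n} \<Longrightarrow>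
      (\<lambda>f. superpose_list M (map (\<lambda>i. K (f i)) is)) \<in> PiN n M \<rightarrow>\<^sub>M prob_algebra (listM M)" for "is"
  proof (induction "is")
    case Nil
    show ?case using return_Nil_in_prob_algebra by (simp add: superpose_list_def)
  next
    case (Cons i "is")
    have "(\<lambda>f. K (f i)) \<in> PiN n M \<rightarrow>\<^sub>M prob_algebra (listM M)"
      using Cons.prems by (intro measurable_compose[OF _ K] measurable_component_singleton) auto
    with Cons show ?case by (auto simp: superpose_list_Cons intro!: measurable_superpose ne)
  qed
  from this[of "[0..<n]"]
  show "(\<lambda>f. superpose_list M (map K (map f [0..<n]))) \<in> PiN n M \<rightarrow>\<^sub>M prob_algebra (listM M)"
    by (simp add: comp_def atLeast0LessThan)
qed

lemma nn_integral_superpose: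
  assumes P: "P \<in> space (prob_algebra (listM M))" and Q: "Q \<in> space (prob_algebra (listM M))"
    and ne: "space M \<noteq> {}" and h: "h \<in> borel_measurable (listM M)"
  shows "(\<integral>\<^sup>+xs. h xs \<partial>superpose M P Q) = (\<integral>\<^sup>+xs. \<integral>\<^sup>+ys. h (xs @ ys) \<partial>Q \<partial>P)"
proof -
  have "sets (P \<Otimes>\<^sub>M Q) = sets (listM M \<Otimes>\<^sub>M listM M)"
    using prob_algebraD(2)[OF P] prob_algebraD(2)[OF Q] by (intro sets_pair_measure_cong) auto
  then have app: "(\<lambda>(xs, ys). xs @ ys) \<in> P \<Otimes>\<^sub>M Q \<rightarrow>\<^sub>M listM M"
    using measurable_append_listM[OF ne] by (simp cong: measurable_cong_sets)
  interpret Q: sigma_finite_measure Q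
    using prob_algebraD(1)[OF Q] by (simp add: prob_space_imp_sigma_finite)
  have "(\<integral>\<^sup>+xs. h xs \<partial>superpose M P Q) = (\<integral>\<^sup>+z. h (case z of (xs, ys) \<Rightarrow> xs @ ys) \<partial>(P \<Otimes>\<^sub>M Q))"
    unfolding superpose_def by (rule nn_integral_distr[OF app]) (use h in \<open>simp cong: measurable_cong_sets\<close>)
  also have "\<dots> = (\<integral>\<^sup>+xs. \<integral>\<^sup>+ys. h (xs @ ys) \<partial>Q \<partial>P)"
    using Q.nn_integral_fst[OF measurable_compose[OF app h]] by simp
  finally show ?thesis .
qed

lemma nn_integral_npoints_superpose:
  assumes P: "P \<in> space (prob_algebra (listM M))" and Q: "Q \<in> space (prob_algebra (listM M))"
    and ne: "space M \<noteq> {}" and B: "B \<in> sets M"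
  shows "(\<integral>\<^sup>+xs. of_nat (npoints B xs) \<partial>superpose M P Q) =
     (\<integral>\<^sup>+xs. of_nat (npoints B xs) \<partial>P) + (\<integral>\<^sup>+xs. of_nat (npoints B xs) \<partial>Q)"
proof -
  have np_P: "(\<lambda>xs. of_nat (npoints B xs) :: ennreal) \<in> borel_measurable P"
    and np_Q: "(\<lambda>xs. of_nat (npoints B xs) :: ennreal) \<in> borel_measurable Q"
    using measurable_npoints[OF B] prob_algebraD(2)[OF P] prob_algebraD(2)[OF Q]
    by (simp_all cong: measurable_cong_sets)
  have "(\<integral>\<^sup>+xs. of_nat (npoints B xs) \<partial>superpose M P Q) =
      (\<integral>\<^sup>+xs. \<integral>\<^sup>+ys. of_nat (npoints B xs) + of_nat (npoints B ys) \<partial>Q \<partial>P)"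
    using nn_integral_superpose[OF P Q ne measurable_npoints[OF B]]
    by (simp add: npoints_append)
  also have "\<dots> = (\<integral>\<^sup>+xs. of_nat (npoints B xs) + (\<integral>\<^sup>+ys. of_nat (npoints B ys) \<partial>Q) \<partial>P)"
    using np_Q prob_space.emeasure_space_1[OF prob_algebraD(1)[OF Q]]
    by (intro nn_integral_cong) (simp add: nn_integral_add)
  also have "\<dots> = (\<integral>\<^sup>+xs. of_nat (npoints B xs) \<partial>P) + (\<integral>\<^sup>+xs. of_nat (npoints B xs) \<partial>Q)"
    using np_P prob_space.emeasure_space_1[OF prob_algebraD(1)[OF P]] by (simp add: nn_integral_add)
  finally show ?thesis .
qed

lemma nn_integral_npoints_superpose_list:
  assumes "set Ps \<subseteq> space (prob_algebra (listM M))" "space M \<noteq> {}" "B \<in> sets M"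
  shows "(\<integral>\<^sup>+xs. of_nat (npoints B xs) \<partial>superpose_list M Ps) =
    (\<Sum>P\<leftarrow>Ps. \<integral>\<^sup>+xs. of_nat (npoints B xs) \<partial>P)"
  using assms
proof (induction Ps)
  case Nil
  have "(\<integral>\<^sup>+xs. of_nat (npoints B xs) \<partial>return (listM M) []) = (of_nat (npoints B []) :: ennreal)"
    using Nil by (intro nn_integral_return) auto
  then show ?case by (simp add: superpose_list_def npoints_def)
next
  case (Cons P Ps)
  then show ?case
    by (simp add: superpose_list_Cons nn_integral_npoints_superpose superpose_list_in_prob_algebra)
qed

lemma card_prob_superpose:
  assumes P: "P \<in> space (prob_algebra (listM M))" and Q: "Q \<in> space (prob_algebra (listM M))"
    and ne: "space M \<noteq> {}"
  shows "card_prob M (superpose M P Q) n = (\<Sum>i=0..n. card_prob M P i * card_prob M Q (n - i))"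
proof -
  let ?L = "\<lambda>n. {xs \<in> lists (space M). length xs = n}"
  have space_P: "space P = lists (space M)" and space_Q: "space Q = lists (space M)"
    using sets_eq_imp_space_eq[OF prob_algebraD(2)[OF P]] sets_eq_imp_space_eq[OF prob_algebraD(2)[OF Q]]
    by auto
  have inner: "(\<integral>\<^sup>+ys. indicator (?L n) (xs @ ys) \<partial>Q) = (\<Sum>i=0..n. indicator (?L i) xs * card_prob M Q (n - i))"
    if xs: "xs \<in> lists (space M)" for xs
  proof -
    have "(\<integral>\<^sup>+ys. indicator (?L n) (xs @ ys) \<partial>Q)
        = (\<integral>\<^sup>+ys. (if length xs \<le> n then indicator (?L (n - length xs)) ys else 0) \<partial>Q)"
      using xs by (intro nn_integral_cong) (auto simp: space_Q indicator_def)
    also have "\<dots> = (if length xs \<le> n then card_prob M Q (n - length xs) else 0)"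
      using prob_algebraD(2)[OF Q] by (simp add: card_prob_def)
    also have "\<dots> = (\<Sum>i=0..n. indicator (?L i) xs * card_prob M Q (n - i))"
      using xs by (simp add: indicator_def sum.delta' if_distrib cong: if_cong)
    finally show ?thesis .
  qed
  have "card_prob M (superpose M P Q) n = (\<integral>\<^sup>+xs. indicator (?L n) xs \<partial>superpose M P Q)"
    by (simp add: card_prob_def superpose_def)
  also have "\<dots> = (\<integral>\<^sup>+xs. \<integral>\<^sup>+ys. indicator (?L n) (xs @ ys) \<partial>Q \<partial>P)"
    by (rule nn_integral_superpose[OF P Q ne]) simp
  also have "\<dots> = (\<integral>\<^sup>+xs. (\<Sum>i=0..n. indicator (?L i) xs * card_prob M Q (n - i)) \<partial>P)"
    by (intro nn_integral_cong) (simp add: space_P inner)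
  also have "\<dots> = (\<Sum>i=0..n. card_prob M P i * card_prob M Q (n - i))"
    using prob_algebraD(2)[OF P] by (subst nn_integral_sum) (auto simp: card_prob_def nn_integral_multc)
  finally show ?thesis .
qed

lemma card_fps_superpose:
  assumes "P \<in> space (prob_algebra (listM M))" "Q \<in> space (prob_algebra (listM M))" "space M \<noteq> {}"
  shows "card_fps M (superpose M P Q) = card_fps M P * card_fps M Q"
  by (rule fps_ext) (simp add: card_fps_def fps_mult_nth card_prob_superpose[OF assms])

lemma card_fps_superpose_list:
  assumes "set Ps \<subseteq> space (prob_algebra (listM M))" "space M \<noteq> {}"
  shows "card_fps M (superpose_list M Ps) = prod_list (map (card_fps M) Ps)"
  using assms
proof (induction Ps)
  case Nil
  have "card_fps M (return (listM M) []) = 1"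
    by (rule fps_ext) (auto simp: card_fps_def card_prob_def indicator_def)
  then show ?case by (simp add: superpose_list_def)
next
  case (Cons P Ps)
  then show ?case
    by (simp add: superpose_list_Cons card_fps_superpose superpose_list_in_prob_algebra)
qed

section \<open>Bernoulli and Poisson point processes\<close>

lemma measurable_prob_algebra_emeasureI:
  assumes "\<And>x. x \<in> space N \<Longrightarrow> prob_space (K x)"
    and "\<And>x. x \<in> space N \<Longrightarrow> sets (K x) = sets L"
    and "\<And>A. A \<in> sets L \<Longrightarrow> (\<lambda>x. emeasure (K x) A) \<in> borel_measurable N"
  shows "K \<in> N \<rightarrow>\<^sub>M prob_algebra L"
proof (rule measurable_prob_algebra_generated[where \<Omega>="space L" and G="sets L"])
  show "sets L = sigma_sets (space L) (sets L)" by (simp add: sets.sigma_sets_eq)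
  show "Int_stable (sets L)" by (auto simp: Int_stable_def)
  show "sets L \<subseteq> Pow (space L)" using sets.space_closed by auto
qed (use assms in auto)

definition poisson_prob :: "real \<Rightarrow> nat \<Rightarrow> real" where
  "poisson_prob lam k = lam ^ k / fact k * exp (- lam)"

lemma poisson_prob_nonneg: "0 \<le> lam \<Longrightarrow> 0 \<le> poisson_prob lam k"
  by (simp add: poisson_prob_def)

lemma sums_poisson_prob: "poisson_prob lam sums 1"
proof -
  have "(\<lambda>k. lam ^ k / fact k) sums exp lam"
    using exp_converges[of lam] by (simp add: divide_inverse_commute)
  from sums_mult2[OF this, of "exp (- lam)"] show ?thesis
    by (simp add: poisson_prob_def[abs_def] exp_minus_inverse)
qed

lemma sums_mean_poisson_prob: "(\<lambda>k. real k * poisson_prob lam k) sums lam"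
proof -
  have "(\<lambda>k. lam * poisson_prob lam k) sums lam"
    using sums_mult[OF sums_poisson_prob, of lam] by simp
  moreover have "lam * poisson_prob lam k = real (Suc k) * poisson_prob lam (Suc k)" for k
    unfolding poisson_prob_def fact_Suc power_Suc of_nat_mult by (simp add: divide_simps)
  ultimately have "(\<lambda>k. real (Suc k) * poisson_prob lam (Suc k)) sums lam"
    by simp
  then show ?thesis by (subst (asm) sums_Suc_iff) simp
qed

lemma sets_poisson_card [simp, measurable_cong]: "sets (poisson_card lam) = UNIV"
  by (simp add: poisson_card_def)

lemma space_poisson_card [simp]: "space (poisson_card lam) = UNIV"
  by (simp add: poisson_card_def)

lemma nn_integral_poisson_card:
  "(\<integral>\<^sup>+k. f k \<partial>poisson_card lam) = (\<Sum>k. ennreal (poisson_prob lam k) * f k)"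
  unfolding poisson_card_def poisson_prob_def[symmetric]
  by (subst nn_integral_density) (auto simp: nn_integral_count_space_nat)

lemma prob_space_poisson_card:
  assumes "0 \<le> lam" shows "prob_space (poisson_card lam)"
proof
  have "emeasure (poisson_card lam) UNIV = (\<Sum>k. ennreal (poisson_prob lam k))"
    using nn_integral_poisson_card[where f="indicator UNIV" and lam=lam] by simp
  also have "\<dots> = 1"
    using sums_poisson_prob[of lam] poisson_prob_nonneg[OF assms]
    by (subst suminf_ennreal2) (auto simp: sums_iff)
  finally show "emeasure (poisson_card lam) (space (poisson_card lam)) = 1"
    by simp
qed

lemma measurable_poisson_card:
  assumes "l \<in> borel_measurable N" and "\<And>x. x \<in> space N \<Longrightarrow> 0 \<le> l x"
  shows "(\<lambda>x. poisson_card (l x)) \<in> N \<rightarrow>\<^sub>M prob_algebra (count_space UNIV)"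
proof (rule measurable_prob_algebra_emeasureI)
  fix A :: "nat set"
  show "(\<lambda>x. emeasure (poisson_card (l x)) A) \<in> borel_measurable N"
    using nn_integral_poisson_card[where f="indicator A"] assms(1)
    by (simp add: poisson_prob_def)
qed (use assms prob_space_poisson_card in auto)

lemma bernoulli_branch_in_prob_algebra:
  assumes "S \<in> space (prob_algebra M)"
  shows "(if b then distr S (listM M) (\<lambda>y. [y]) else return (listM M) []) \<in> space (prob_algebra (listM M))"
proof -
  have "(\<lambda>y. [y]) \<in> S \<rightarrow>\<^sub>M listM M"
    using measurable_singleton_listM prob_algebraD(2)[OF assms] by (simp cong: measurable_cong_sets)
  then show ?thesis
    using prob_algebraD[OF assms] return_Nil_in_prob_algebra
    by (auto simp: space_prob_algebra intro!: prob_space.prob_space_distr)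
qed

lemma bernoulli_pmf_in_prob_algebra: "measure_pmf (bernoulli_pmf p) \<in> space (prob_algebra (count_space UNIV))"
  by (simp add: space_prob_algebra prob_space_measure_pmf)

lemma measurable_bernoulli_branch:
  assumes "S \<in> space (prob_algebra M)" and "sets N = UNIV"
  shows "(\<lambda>b. if b then distr S (listM M) (\<lambda>y. [y]) else return (listM M) [])
           \<in> N \<rightarrow>\<^sub>M prob_algebra (listM M)"
  using bernoulli_branch_in_prob_algebra[OF assms(1)] assms(2) by (auto simp: measurable_def)

lemma emeasure_bernoulli_pp:
  assumes S: "S \<in> space (prob_algebra M)" and p: "0 \<le> p" "p \<le> 1" and A: "A \<in> sets (listM M)"
  shows "emeasure (bernoulli_pp M p S) A =
     ennreal p * emeasure S ((\<lambda>y. [y]) -` A \<inter> space M) + ennreal (1 - p) * indicator A []"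
proof -
  have "(\<lambda>y. [y]) \<in> S \<rightarrow>\<^sub>M listM M"
    using measurable_singleton_listM prob_algebraD(2)[OF S] by (simp cong: measurable_cong_sets)
  then show ?thesis
    unfolding bernoulli_pp_def
    using A p sets_eq_imp_space_eq[OF prob_algebraD(2)[OF S]]
    by (simp add: emeasure_bind_prob_algebra[OF bernoulli_pmf_in_prob_algebra measurable_bernoulli_branch[OF S]]
        nn_integral_bernoulli_pmf emeasure_distr mult.commute)
qed

lemma measurable_bernoulli_pp:
  assumes p: "p \<in> borel_measurable N" "\<And>x. x \<in> space N \<Longrightarrow> 0 \<le> p x \<and> p x \<le> 1"
    and S: "S \<in> N \<rightarrow>\<^sub>M prob_algebra M"
  shows "(\<lambda>x. bernoulli_pp M (p x) (S x)) \<in> N \<rightarrow>\<^sub>M prob_algebra (listM M)"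
proof (rule measurable_prob_algebra_emeasureI)
  fix x assume "x \<in> space N"
  then show "prob_space (bernoulli_pp M (p x) (S x))"
    unfolding bernoulli_pp_def using measurable_space[OF S]
    by (intro prob_space_bind'[OF bernoulli_pmf_in_prob_algebra measurable_bernoulli_branch]) auto
  show "sets (bernoulli_pp M (p x) (S x)) = sets (listM M)"
    unfolding bernoulli_pp_def by (subst sets_bind) auto
next
  fix A assume A: "A \<in> sets (listM M)"
  have pre: "(\<lambda>y. [y]) -` A \<inter> space M \<in> sets M"
    using measurable_sets[OF measurable_singleton_listM A] .
  have "(\<lambda>x. ennreal (p x) * emeasure (S x) ((\<lambda>y. [y]) -` A \<inter> space M) + ennreal (1 - p x) * indicator A [])
      \<in> borel_measurable N"
    using p(1) measurable_emeasure_kernel[OF measurable_prob_algebraD[OF S] pre] by measurable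
  then show "(\<lambda>x. emeasure (bernoulli_pp M (p x) (S x)) A) \<in> borel_measurable N"
    by (rule measurable_cong[THEN iffD1, rotated])
       (use p(2) measurable_space[OF S] A in \<open>auto simp: emeasure_bernoulli_pp\<close>)
qed

lemma nn_integral_npoints_bernoulli_pp:
  assumes S: "S \<in> space (prob_algebra M)" and p: "0 \<le> p" "p \<le> 1" and B: "B \<in> sets M"
  shows "(\<integral>\<^sup>+xs. of_nat (npoints B xs) \<partial>bernoulli_pp M p S) = ennreal p * emeasure S B"
proof -
  have singleton: "(\<lambda>y. [y]) \<in> S \<rightarrow>\<^sub>M listM M"
    using measurable_singleton_listM prob_algebraD(2)[OF S] by (simp cong: measurable_cong_sets)
  have one_point: "(\<integral>\<^sup>+xs. of_nat (npoints B xs) \<partial>distr S (listM M) (\<lambda>y. [y])) = emeasure S B"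
    using measurable_npoints[OF B] B prob_algebraD(2)[OF S]
    by (subst nn_integral_distr[OF singleton])
       (auto simp: npoints_def indicator_def nn_integral_indicator[symmetric] intro!: nn_integral_cong)
  have no_point: "(\<integral>\<^sup>+xs. of_nat (npoints B xs) \<partial>return (listM M) []) = 0"
    by (subst nn_integral_return[OF _ measurable_npoints[OF B]]) (auto simp: npoints_def)
  have "(\<integral>\<^sup>+xs. of_nat (npoints B xs) \<partial>bernoulli_pp M p S) = (\<integral>\<^sup>+b. \<integral>\<^sup>+xs. of_nat (npoints B xs)
      \<partial>(if b then distr S (listM M) (\<lambda>y. [y]) else return (listM M) []) \<partial>measure_pmf (bernoulli_pmf p))"
    unfolding bernoulli_pp_def
    by (rule nn_integral_bind[OF measurable_npoints[OF B]
          measurable_prob_algebraD[OF measurable_bernoulli_branch[OF S sets_measure_pmf]]])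
  also have "\<dots> = ennreal p * emeasure S B"
    using p by (subst nn_integral_bernoulli_pmf) (auto simp: one_point no_point mult.commute)
  finally show ?thesis .
qed

lemma card_prob_bernoulli_pp:
  assumes S: "S \<in> space (prob_algebra M)" and p: "0 \<le> p" "p \<le> 1"
  shows "card_prob M (bernoulli_pp M p S) n =
    (if n = 0 then ennreal (1 - p) else if n = 1 then ennreal p else 0)"
proof -
  have "(\<lambda>y. [y]) -` {xs \<in> lists (space M). length xs = n} \<inter> space M = (if n = 1 then space M else {})"
    by auto
  then show ?thesis
    unfolding card_prob_def emeasure_bernoulli_pp[OF S p sets_length_eq_listM]
    using prob_space.emeasure_space_1[OF prob_algebraD(1)[OF S]] sets_eq_imp_space_eq[OF prob_algebraD(2)[OF S]]
    by (auto simp: indicator_def)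
qed

lemma poisson_pp_eq_bind_iid_config:
  assumes "S \<in> space (prob_algebra M)"
  shows "poisson_pp M lam S = poisson_card lam \<bind> (\<lambda>n. iid_config M n S)"
  unfolding poisson_pp_def by (rule iid_pp_eq_bind_iid_config[OF assms])

lemma measurable_poisson_pp:
  assumes l: "l \<in> borel_measurable N" "\<And>x. x \<in> space N \<Longrightarrow> 0 \<le> l x"
    and S: "S \<in> N \<rightarrow>\<^sub>M prob_algebra M" and ne: "space M \<noteq> {}"
  shows "(\<lambda>x. poisson_pp M (l x) (S x)) \<in> N \<rightarrow>\<^sub>M prob_algebra (listM M)"
proof -
  have "(\<lambda>y. (\<lambda>n y. iid_config M n (S (fst y))) (snd y) y) \<in> N \<Otimes>\<^sub>M count_space UNIV \<rightarrow>\<^sub>M prob_algebra (listM M)"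
  proof (rule measurable_compose_countable)
    show "(\<lambda>y. iid_config M n (S (fst y))) \<in> N \<Otimes>\<^sub>M count_space UNIV \<rightarrow>\<^sub>M prob_algebra (listM M)" for n
      using measurable_comp[OF measurable_fst measurable_iid_config[OF S ne, of n]] by (simp add: comp_def)
  qed measurable
  then have "(\<lambda>(x, n). iid_config M n (S x)) \<in> N \<Otimes>\<^sub>M count_space UNIV \<rightarrow>\<^sub>M prob_algebra (listM M)"
    by (simp add: case_prod_beta)
  from measurable_bind_prob_space2[OF measurable_poisson_card[OF l] this]
  show ?thesis
    by (rule measurable_cong[THEN iffD1, rotated])
       (use measurable_space[OF S] in \<open>auto simp: poisson_pp_eq_bind_iid_config\<close>)
qed

lemma nn_integral_npoints_poisson_pp:
  assumes S: "S \<in> space (prob_algebra M)" and lam: "0 \<le> lam" and B: "B \<in> sets M"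
  shows "(\<integral>\<^sup>+xs. of_nat (npoints B xs) \<partial>poisson_pp M lam S) = ennreal lam * emeasure S B"
proof -
  have "(\<integral>\<^sup>+xs. of_nat (npoints B xs) \<partial>poisson_pp M lam S)
      = (\<Sum>k. ennreal (poisson_prob lam k) * (of_nat k * emeasure S B))"
    unfolding poisson_pp_eq_bind_iid_config[OF S]
    by (simp add: nn_integral_bind[OF measurable_npoints[OF B] measurable_prob_algebraD[OF
          measurable_iid_config_from_discrete[OF S]]] nn_integral_poisson_card nn_integral_npoints_iid_config[OF S B])
  also have "\<dots> = (\<Sum>k. ennreal (real k * poisson_prob lam k) * emeasure S B)"
    using poisson_prob_nonneg[OF lam]
    by (intro suminf_cong) (simp add: ennreal_mult' ennreal_of_nat_eq_real_of_nat mult_ac)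
  also have "\<dots> = (\<Sum>k. ennreal (real k * poisson_prob lam k)) * emeasure S B"
    by (rule ennreal_suminf_multc)
  also have "(\<Sum>k. ennreal (real k * poisson_prob lam k)) = ennreal lam"
    using sums_mean_poisson_prob[of lam] poisson_prob_nonneg[OF lam]
    by (subst suminf_ennreal2) (auto simp: sums_iff)
  finally show ?thesis .
qed

lemma card_prob_poisson_pp:
  assumes S: "S \<in> space (prob_algebra M)" and lam: "0 \<le> lam"
  shows "card_prob M (poisson_pp M lam S) n = ennreal (poisson_prob lam n)"
proof -
  have "card_prob M (poisson_pp M lam S) n = (\<integral>\<^sup>+k. card_prob M (iid_config M k S) n \<partial>poisson_card lam)"
    unfolding card_prob_def poisson_pp_eq_bind_iid_config[OF S]
    by (rule emeasure_bind_prob_algebra[OF _ measurable_iid_config_from_discrete[OF S sets_poisson_card]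
          sets_length_eq_listM])
       (use prob_space_poisson_card[OF lam] in \<open>simp_all add: space_prob_algebra\<close>)
  also have "\<dots> = (\<Sum>k. if k = n then ennreal (poisson_prob lam k) else 0)"
    by (simp add: nn_integral_poisson_card card_prob_iid_config[OF S] if_distrib eq_commute cong: if_cong)
  also have "\<dots> = ennreal (poisson_prob lam n)"
    by (rule sums_unique[OF sums_single, symmetric])
  finally show ?thesis .
qed

section \<open>Partial Bell polynomials\<close>

definition bell_indices :: "nat \<Rightarrow> nat \<Rightarrow> (nat \<Rightarrow> nat) set" where
  "bell_indices n j = {k. (\<forall>i. i \<notin> {1..n} \<longrightarrow> k i = 0) \<and>
     (\<Sum>i=1..n. i * k i) = n \<and> (\<Sum>i=1..n. k i) = j}"

definition bell_denom :: "nat \<Rightarrow> (nat \<Rightarrow> nat) \<Rightarrow> real" where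
  "bell_denom n k = (\<Prod>i=1..n. fact (k i) * fact i ^ k i)"

definition bell_monomial :: "nat \<Rightarrow> (nat \<Rightarrow> nat) \<Rightarrow> (nat \<Rightarrow> real) \<Rightarrow> real" where
  "bell_monomial n k x = (\<Prod>i=1..n. x i ^ k i)"

lemma partial_bell_eq_sum_bell_indices:
  "partial_bell n j x = (\<Sum>k\<in>bell_indices n j. fact n / bell_denom n k * bell_monomial n k x)"
  unfolding partial_bell_def bell_indices_def bell_denom_def bell_monomial_def ..

lemma bell_denom_pos: "0 < bell_denom n k"
  unfolding bell_denom_def by (intro prod_pos) auto

lemma sum_fun_upd_remove:
  assumes "finite S" "i \<in> S"
  shows "(\<Sum>l\<in>S. g l ((k(i := v)) l)) = g i v + (\<Sum>l\<in>S - {i}. g l (k l) :: 'b::comm_monoid_add)"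
  using assms by (simp add: sum.remove)

lemma prod_fun_upd_remove:
  assumes "finite S" "i \<in> S"
  shows "(\<Prod>l\<in>S. g l ((k(i := v)) l)) = g i v * (\<Prod>l\<in>S - {i}. g l (k l) :: 'b::comm_monoid_mult)"
  using assms by (simp add: prod.remove)

lemma mult_le_weighted_sum:
  fixes k :: "nat \<Rightarrow> nat"
  assumes "\<forall>i. i \<notin> {1..n} \<longrightarrow> k i = 0"
  shows "l * k l \<le> (\<Sum>i=1..n. i * k i)"
proof (cases "l \<in> {1..n}")
  case True
  then show ?thesis by (intro member_le_sum[of l "{1..n}" "\<lambda>i. i * k i"]) auto
qed (use assms in simp)

lemma in_bell_indices_iff:
  fixes k :: "nat \<Rightarrow> nat"
  assumes supp: "\<forall>i. i \<notin> {1..N} \<longrightarrow> k i = 0" and "n \<le> N"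
  shows "k \<in> bell_indices n j \<longleftrightarrow> (\<Sum>i=1..N. i * k i) = n \<and> (\<Sum>i=1..N. k i) = j"
proof -
  have extend: "(\<Sum>i=1..N. g i (k i)) = (\<Sum>i=1..n. g i (k i) :: nat)"
    if "\<forall>i. i \<notin> {1..n} \<longrightarrow> k i = 0" "\<And>i. g i 0 = 0" for g
    by (rule sum.mono_neutral_right) (use that \<open>n \<le> N\<close> in auto)
  have supp_n: "\<forall>i. i \<notin> {1..n} \<longrightarrow> k i = 0" if "(\<Sum>i=1..N. i * k i) = n"
  proof (intro allI impI)
    fix i assume i: "i \<notin> {1..n}"
    show "k i = 0"
    proof (rule ccontr)
      assume "k i \<noteq> 0"
      then have "n < i" using i supp by (cases i) auto
      also have "i \<le> i * k i" using \<open>k i \<noteq> 0\<close> by simp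
      finally show False using mult_le_weighted_sum[OF supp, of i] that by linarith
    qed
  qed
  show ?thesis
  proof
    assume "k \<in> bell_indices n j"
    then show "(\<Sum>i=1..N. i * k i) = n \<and> (\<Sum>i=1..N. k i) = j"
      using extend[of "\<lambda>i v. i * v"] extend[of "\<lambda>i v. v"] by (simp add: bell_indices_def)
  next
    assume "(\<Sum>i=1..N. i * k i) = n \<and> (\<Sum>i=1..N. k i) = j"
    with supp_n show "k \<in> bell_indices n j"
      using extend[of "\<lambda>i v. i * v"] extend[of "\<lambda>i v. v"] by (simp add: bell_indices_def)
  qed
qed

lemma bell_index_le:
  assumes k: "k \<in> bell_indices n j" shows "k i \<le> n"
proof (cases "k i = 0")
  case False
  have supp: "\<forall>l. l \<notin> {1..n} \<longrightarrow> k l = 0" and "(\<Sum>l=1..n. l * k l) = n"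
    using k by (auto simp: bell_indices_def)
  then have "i * k i \<le> n" using mult_le_weighted_sum[OF supp, of i] by simp
  moreover have "1 * k i \<le> i * k i"
    using False supp by (intro mult_le_mono1) (cases i; auto)
  ultimately show ?thesis by linarith
qed simp

lemma finite_bell_indices: "finite (bell_indices n j)"
proof -
  let ?e = "\<lambda>g i. if i \<in> {1..n} then g i else (0::nat)"
  have "bell_indices n j \<subseteq> ?e ` (PiE {1..n} (\<lambda>_. {0..n}))"
  proof
    fix k assume k: "k \<in> bell_indices n j"
    then have "k = ?e (restrict k {1..n})" by (auto simp: bell_indices_def fun_eq_iff)
    moreover have "restrict k {1..n} \<in> PiE {1..n} (\<lambda>_. {0..n})"
      using bell_index_le[OF k] by auto
    ultimately show "k \<in> ?e ` (PiE {1..n} (\<lambda>_. {0..n}))" by blast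
  qed
  then show ?thesis by (rule finite_subset) (intro finite_imageI finite_PiE; auto)
qed

lemma sums_fun_upd:
  fixes k :: "nat \<Rightarrow> nat"
  assumes "i \<in> {1..n}"
  shows "(\<Sum>l=1..n. l * (k(i := v)) l) + i * k i = (\<Sum>l=1..n. l * k l) + i * v"
    and "(\<Sum>l=1..n. (k(i := v)) l) + k i = (\<Sum>l=1..n. k l) + v"
  using sum_fun_upd_remove[of "{1..n}" i "\<lambda>l v. l * v" k v] sum.remove[of "{1..n}" i "\<lambda>l. l * k l"]
    sum_fun_upd_remove[of "{1..n}" i "\<lambda>l v. v" k v] sum.remove[of "{1..n}" i k] assms
  by simp_all

lemma bell_indices_incr:
  assumes i: "i \<in> {1..n}" and k: "k \<in> bell_indices (n - i) j"
  shows "k(i := Suc (k i)) \<in> bell_indices n (Suc j)"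
proof -
  have supp: "\<forall>l. l \<notin> {1..n} \<longrightarrow> k l = 0" using k by (auto simp: bell_indices_def)
  then have "(\<Sum>l=1..n. l * k l) = n - i" "(\<Sum>l=1..n. k l) = j"
    using k in_bell_indices_iff[of n k "n - i" j] by auto
  moreover have "\<forall>l. l \<notin> {1..n} \<longrightarrow> (k(i := Suc (k i))) l = 0" using supp i by auto
  ultimately show ?thesis
    using sums_fun_upd[OF i, of k "Suc (k i)"] i by (subst in_bell_indices_iff[of n]) auto
qed

lemma bell_indices_decr:
  assumes k: "k \<in> bell_indices n (Suc j)" and i: "i \<in> {1..n}" and ki: "1 \<le> k i"
  shows "k(i := k i - 1) \<in> bell_indices (n - i) j"
proof -
  have supp: "\<forall>l. l \<notin> {1..n} \<longrightarrow> k l = 0"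
    and "(\<Sum>l=1..n. l * k l) = n" "(\<Sum>l=1..n. k l) = Suc j"
    using k by (auto simp: bell_indices_def)
  moreover have "\<forall>l. l \<notin> {1..n} \<longrightarrow> (k(i := k i - 1)) l = 0" using supp i by auto
  moreover have "i * (k i - 1) + i = i * k i" using ki by (cases "k i") auto
  ultimately show ?thesis
    using sums_fun_upd[OF i, of k "k i - 1"] ki by (subst in_bell_indices_iff[of n]) auto
qed

lemma bell_term_incr:
  assumes i: "i \<in> {1..n}" and k: "k \<in> bell_indices (n - i) j"
  shows "real (n choose i) * x i * (fact (n - i) / bell_denom (n - i) k * bell_monomial (n - i) k x)
       = real (Suc (k i)) * (fact n / bell_denom n (k(i := Suc (k i))) * bell_monomial n (k(i := Suc (k i))) x)"
proof -
  have supp: "\<forall>l. l \<notin> {1..n-i} \<longrightarrow> k l = 0" using k by (simp add: bell_indices_def)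
  have extend: "(\<Prod>l=1..n. g l (k l)) = (\<Prod>l=1..n-i. g l (k l) :: real)" if "\<And>l. g l 0 = 1" for g
    by (rule prod.mono_neutral_right) (use supp that in auto)
  have "bell_denom n (k(i := Suc (k i))) = real (Suc (k i)) * fact i * bell_denom (n - i) k"
    using prod_fun_upd_remove[of "{1..n}" i "\<lambda>l v. fact v * fact l ^ v :: real" k "Suc (k i)"]
      prod.remove[of "{1..n}" i "\<lambda>l. fact (k l) * fact l ^ k l :: real"] i
      extend[of "\<lambda>l v. fact v * fact l ^ v"]
    by (simp add: bell_denom_def algebra_simps)
  moreover have "bell_monomial n (k(i := Suc (k i))) x = x i * bell_monomial (n - i) k x"
    using prod_fun_upd_remove[of "{1..n}" i "\<lambda>l v. x l ^ v" k "Suc (k i)"]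
      prod.remove[of "{1..n}" i "\<lambda>l. x l ^ k l"] i extend[of "\<lambda>l v. x l ^ v"]
    by (simp add: bell_monomial_def algebra_simps)
  moreover have "real (n choose i) = fact n / (fact i * fact (n - i))"
    using i by (simp add: binomial_fact)
  ultimately show ?thesis
    using bell_denom_pos[of "n - i" k] by (simp add: divide_simps mult_ac)
qed

lemma bij_betw_bell_indices_incr:
  "bij_betw (\<lambda>(i, k). (k(i := Suc (k i)), i))
     (SIGMA i:{1..n}. bell_indices (n - i) j)
     (SIGMA k:bell_indices n (Suc j). {i \<in> {1..n}. 1 \<le> k i})"
  using bell_indices_incr bell_indices_decr
  by (intro bij_betw_byWitness[where f'="\<lambda>(k, i). (i, k(i := k i - 1))"]) force+

lemma partial_bell_recurrence:
  "real (Suc j) * partial_bell n (Suc j) x =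
    (\<Sum>i=1..n. real (n choose i) * x i * partial_bell (n - i) j x)"
proof -
  define T where "T k = fact n / bell_denom n k * bell_monomial n k x" for k
  have "(\<Sum>i=1..n. real (n choose i) * x i * partial_bell (n - i) j x)
      = (\<Sum>i=1..n. \<Sum>k\<in>bell_indices (n - i) j. real (Suc (k i)) * T (k(i := Suc (k i))))"
    unfolding partial_bell_eq_sum_bell_indices sum_distrib_left T_def
    by (intro sum.cong refl) (simp only: bell_term_incr)
  also have "\<dots> = (\<Sum>(i, k)\<in>(SIGMA i:{1..n}. bell_indices (n - i) j). real (Suc (k i)) * T (k(i := Suc (k i))))"
    by (simp add: sum.Sigma finite_bell_indices)
  also have "\<dots> = (\<Sum>(k, i)\<in>(SIGMA k:bell_indices n (Suc j). {i \<in> {1..n}. 1 \<le> k i}). real (k i) * T k)"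
    by (subst sum.reindex_bij_betw[OF bij_betw_bell_indices_incr, symmetric]) (simp add: case_prod_beta)
  also have "\<dots> = (\<Sum>k\<in>bell_indices n (Suc j). (\<Sum>i\<in>{i \<in> {1..n}. 1 \<le> k i}. real (k i)) * T k)"
    by (simp add: sum.Sigma[symmetric] finite_bell_indices sum_distrib_right)
  also have "\<dots> = (\<Sum>k\<in>bell_indices n (Suc j). real (Suc j) * T k)"
  proof (intro sum.cong refl)
    fix k assume k: "k \<in> bell_indices n (Suc j)"
    have "(\<Sum>i\<in>{i \<in> {1..n}. 1 \<le> k i}. real (k i)) = (\<Sum>i=1..n. real (k i))"
      by (rule sum.mono_neutral_left) auto
    also have "\<dots> = real (Suc j)" using k by (simp add: bell_indices_def flip: of_nat_sum)
    finally show "(\<Sum>i\<in>{i \<in> {1..n}. 1 \<le> k i}. real (k i)) * T k = real (Suc j) * T k" by simp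
  qed
  also have "\<dots> = real (Suc j) * partial_bell n (Suc j) x"
    by (simp add: partial_bell_eq_sum_bell_indices sum_distrib_left T_def)
  finally show ?thesis ..
qed

lemma partial_bell_0_right: "partial_bell n 0 x = (if n = 0 then 1 else 0)"
proof -
  have "bell_indices n 0 = (if n = 0 then {\<lambda>_. 0} else {})"
  proof (cases "n = 0")
    case False
    have "k \<notin> bell_indices n 0" for k
    proof
      assume k: "k \<in> bell_indices n 0"
      then have "(\<Sum>i=1..n. i * k i) = 0" by (simp add: bell_indices_def)
      then show False using k False by (simp add: bell_indices_def)
    qed
    then show ?thesis using False by auto
  qed (auto simp: bell_indices_def fun_eq_iff)
  then show ?thesis by (simp add: partial_bell_eq_sum_bell_indices bell_denom_def bell_monomial_def)
qed

lemma partial_bell_eq_0_if_less: "n < j \<Longrightarrow> partial_bell n j x = 0"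
proof -
  assume "n < j"
  have "k \<notin> bell_indices n j" for k
  proof
    assume k: "k \<in> bell_indices n j"
    have "(\<Sum>i=1..n. k i) \<le> (\<Sum>i=1..n. i * k i)" by (intro sum_mono) simp
    then show False using k \<open>n < j\<close> by (simp add: bell_indices_def)
  qed
  then have "bell_indices n j = {}" by blast
  then show ?thesis by (simp add: partial_bell_eq_sum_bell_indices)
qed

lemma partial_bell_nonneg: "(\<And>i. 0 \<le> x i) \<Longrightarrow> 0 \<le> partial_bell n j x"
  unfolding partial_bell_eq_sum_bell_indices bell_monomial_def using bell_denom_pos
  by (intro sum_nonneg mult_nonneg_nonneg divide_nonneg_pos prod_nonneg) (auto intro: less_imp_le)

lemma fps_nth_power_egf_partial_bell:
  fixes b :: "nat \<Rightarrow> real"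
  shows "fps_nth (Abs_fps (\<lambda>i. if i = 0 then 0 else b i / fact i) ^ j) n = fact j / fact n * partial_bell n j b"
proof (induction j arbitrary: n)
  case 0
  then show ?case by (simp add: partial_bell_0_right)
next
  case (Suc j)
  let ?A = "Abs_fps (\<lambda>i. if i = 0 then 0 else b i / fact i)"
  have "fps_nth (?A ^ Suc j) n = (\<Sum>i=1..n. fps_nth ?A i * fps_nth (?A ^ j) (n - i))"
    by (simp add: fps_mult_nth sum.atLeast_Suc_atMost)
  also have "\<dots> = (\<Sum>i=1..n. fact j / fact n * (real (n choose i) * b i * partial_bell (n - i) j b))"
  proof (intro sum.cong refl)
    fix i assume i: "i \<in> {1..n}"
    then have "real (n choose i) = fact n / (fact i * fact (n - i))"
      by (simp add: binomial_fact)
    with i show "fps_nth ?A i * fps_nth (?A ^ j) (n - i) =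
        fact j / fact n * (real (n choose i) * b i * partial_bell (n - i) j b)"
      unfolding Suc by (simp add: divide_simps)
  qed
  also have "\<dots> = fact j / fact n * (real (Suc j) * partial_bell n (Suc j) b)"
    by (simp only: partial_bell_recurrence sum_distrib_left)
  also have "\<dots> = fact (Suc j) / fact n * partial_bell n (Suc j) b"
    by (simp add: field_simps)
  finally show ?case .
qed

lemma fps_nth_power_egf:
  fixes b :: "nat \<Rightarrow> real"
  shows "fps_nth (Abs_fps (\<lambda>i. b i / fact i) ^ m) n =
    (\<Sum>j\<le>n. partial_bell n j b * (if j \<le> m then fact m / (fact n * fact (m - j)) * b 0 ^ (m - j) else 0))"
proof -
  define A where "A = Abs_fps (\<lambda>i. if i = 0 then 0 else b i / fact i)"
  define t where
    "t j = partial_bell n j b * (if j \<le> m then fact m / (fact n * fact (m - j)) * b 0 ^ (m - j) else 0)" for j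
  have shift: "Abs_fps (\<lambda>i. b i / fact i) = A + fps_const (b 0)"
    by (rule fps_ext) (simp add: A_def)
  have "fps_nth (Abs_fps (\<lambda>i. b i / fact i) ^ m) n
      = (\<Sum>j\<le>m. of_nat (m choose j) * fps_nth (A ^ j) n * b 0 ^ (m - j))"
    unfolding shift binomial_ring by (simp add: fps_sum_nth fps_of_nat fps_mult_right_const_nth)
  also have "\<dots> = (\<Sum>j\<le>m. t j)"
  proof (intro sum.cong refl)
    fix j assume "j \<in> {..m}"
    then have "real (m choose j) = fact m / (fact j * fact (m - j))"
      by (simp add: binomial_fact)
    then show "of_nat (m choose j) * fps_nth (A ^ j) n * b 0 ^ (m - j) = t j"
      unfolding A_def fps_nth_power_egf_partial_bell t_def using \<open>j \<in> {..m}\<close> by (simp add: divide_simps)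
  qed
  also have "\<dots> = (\<Sum>j\<le>m + n. t j)"
    by (rule sum.mono_neutral_left) (auto simp: t_def)
  also have "\<dots> = (\<Sum>j\<le>n. t j)"
    by (rule sum.mono_neutral_right) (auto simp: t_def partial_bell_eq_0_if_less)
  finally show ?thesis by (simp add: t_def)
qed

lemma fps_nth_power_nonneg:
  fixes f :: "'a::linordered_semidom fps"
  assumes "\<And>i. 0 \<le> fps_nth f i"
  shows "0 \<le> fps_nth (f ^ m) n"
  using assms by (induction m arbitrary: n) (auto simp: fps_mult_nth intro!: sum_nonneg)

lemma fps_nth_power_ennreal:
  assumes c: "\<And>i. 0 \<le> c i"
  shows "fps_nth (Abs_fps (\<lambda>i. ennreal (c i)) ^ m) n = ennreal (fps_nth (Abs_fps c ^ m) n)"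
proof (induction m arbitrary: n)
  case (Suc m)
  have "0 \<le> fps_nth (Abs_fps c ^ m) k" for k
    using c by (intro fps_nth_power_nonneg) simp
  with Suc c show ?case
    by (simp add: fps_mult_nth flip: ennreal_mult)
qed simp

lemma sums_of_ennreal_suminf:
  assumes a: "\<And>m. 0 \<le> a m" and p: "0 \<le> p" "ennreal p = (\<Sum>m. ennreal (a m))"
  shows "a sums p"
proof -
  have "(\<Sum>m. ennreal (a m)) \<noteq> top" using p(2) by (metis ennreal_neq_top)
  then have "summable a" by (rule summable_suminf_not_top[OF a])
  then have "ennreal p = ennreal (suminf a)" using p(2) a by (simp add: suminf_ennreal2)
  then show ?thesis
    using \<open>summable a\<close> p(1) a by (simp add: sums_iff suminf_nonneg)
qed

text \<open>All terms are nonnegative, so each of the n + 1 series is summable by comparison with the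
  total one and the two summations can be swapped.\<close>

lemma power_egf_mixture_eq_bell_sum:
  fixes b :: "nat \<Rightarrow> real"
  assumes b: "\<And>i. 0 \<le> b i"
    and p: "(\<lambda>m. pmf rho m * fps_nth (Abs_fps (\<lambda>i. b i / fact i) ^ m) n) sums p"
  shows "p = (\<Sum>j\<le>n. partial_bell n j b *
      (\<Sum>m. if j \<le> m then fact m / (fact n * fact (m - j)) * pmf rho m * b 0 ^ (m - j) else 0))"
proof -
  define U where "U j m = (if j \<le> m then fact m / (fact n * fact (m - j)) * pmf rho m * b 0 ^ (m - j) else 0)"
    for j m
  define f where "f j m = partial_bell n j b * U j m" for j m
  have f_nonneg: "0 \<le> f j m" for j m
    using b partial_bell_nonneg[OF b] by (simp add: f_def U_def)
  have split: "pmf rho m * fps_nth (Abs_fps (\<lambda>i. b i / fact i) ^ m) n = (\<Sum>j\<le>n. f j m)" for m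
    unfolding fps_nth_power_egf sum_distrib_left f_def U_def by (intro sum.cong refl) (auto simp: mult_ac)
  have summable_f: "summable (f j)" if "j \<le> n" for j
  proof (rule summable_comparison_test)
    show "\<exists>N. \<forall>m\<ge>N. norm (f j m) \<le> pmf rho m * fps_nth (Abs_fps (\<lambda>i. b i / fact i) ^ m) n"
      using that f_nonneg by (auto simp: split intro!: member_le_sum)
  qed (use p in \<open>simp add: sums_iff\<close>)
  have "p = (\<Sum>m. \<Sum>j\<le>n. f j m)"
    using p by (simp add: split sums_iff)
  also have "\<dots> = (\<Sum>j\<le>n. \<Sum>m. f j m)"
    by (rule suminf_sum) (simp add: summable_f)
  also have "\<dots> = (\<Sum>j\<le>n. partial_bell n j b * (\<Sum>m. U j m))"
  proof (intro sum.cong refl)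
    fix j assume "j \<in> {..n}"
    then have "summable (f j)" by (simp add: summable_f)
    show "(\<Sum>m. f j m) = partial_bell n j b * (\<Sum>m. U j m)"
    proof (cases "partial_bell n j b = 0")
      case False
      then have "summable (U j)"
        using summable_mult[OF \<open>summable (f j)\<close>, of "1 / partial_bell n j b"] by (simp add: f_def)
      then show ?thesis by (simp add: f_def suminf_mult)
    qed (simp add: f_def)
  qed
  finally show ?thesis by (simp add: U_def)
qed

section \<open>I.i.d. point processes\<close>

lemma iid_pp_in_prob_algebra:
  assumes "s \<in> space (prob_algebra M)"
  shows "iid_pp M (measure_pmf rho) s \<in> space (prob_algebra (listM M))"
  unfolding iid_pp_eq_bind_iid_config[OF assms] space_prob_algebra
  by (auto intro!: prob_space_bind' measurable_iid_config_from_discrete[OF assms]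
      simp: space_prob_algebra prob_space_measure_pmf)

lemma nn_integral_iid_pp:
  assumes s: "s \<in> space (prob_algebra M)" and h: "h \<in> borel_measurable (listM M)"
  shows "(\<integral>\<^sup>+xs. h xs \<partial>iid_pp M (measure_pmf rho) s) =
    (\<Sum>m. ennreal (pmf rho m) * (\<integral>\<^sup>+xs. h xs \<partial>iid_config M m s))"
  unfolding iid_pp_eq_bind_iid_config[OF s]
  by (simp add: nn_integral_bind[OF h measurable_prob_algebraD[OF measurable_iid_config_from_discrete[OF s]]]
      nn_integral_measure_pmf nn_integral_count_space_nat)

lemma nn_integral_sum_list_iid_pp:
  assumes s: "s \<in> space (prob_algebra M)" and g: "g \<in> borel_measurable M"
  shows "(\<integral>\<^sup>+xs. (\<Sum>x\<leftarrow>xs. g x) \<partial>iid_pp M (measure_pmf rho) s) =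
    (\<Sum>m. ennreal (pmf rho m) * of_nat m) * (\<integral>\<^sup>+x. g x \<partial>s)"
  using g by (simp add: nn_integral_iid_pp[OF s] nn_integral_sum_list_iid_config[OF s]
      mult.assoc[symmetric] ennreal_suminf_multc)

lemma npoints_UN:
  assumes "disjoint_family A"
  shows "(\<Sum>i. of_nat (npoints (A i) xs) :: ennreal) = of_nat (npoints (\<Union>i. A i) xs)"
proof -
  have "(\<Sum>i. \<Sum>x\<leftarrow>xs. indicator (A i) x :: ennreal) = (\<Sum>x\<leftarrow>xs. \<Sum>i. indicator (A i) x)"
    by (induction xs) (simp_all add: suminf_add[symmetric])
  then show ?thesis
    by (simp add: npoints_eq_sum_list suminf_indicator[OF assms])
qed

lemma emeasure_intensity:
  assumes P: "sets P = sets (listM M)" and B: "B \<in> sets M"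
  shows "emeasure (intensity M P) B = (\<integral>\<^sup>+xs. of_nat (npoints B xs) \<partial>P)"
  unfolding intensity_def
proof (rule emeasure_measure_of_sigma[OF sets.sigma_algebra_axioms _ _ B])
  show "positive (sets M) (\<lambda>B. \<integral>\<^sup>+ xs. of_nat (npoints B xs) \<partial>P)"
    by (simp add: positive_def npoints_def)
  show "countably_additive (sets M) (\<lambda>B. \<integral>\<^sup>+ xs. of_nat (npoints B xs) \<partial>P)"
    unfolding countably_additive_def
  proof (intro allI impI)
    fix A :: "nat \<Rightarrow> _" assume A: "range A \<subseteq> sets M" "disjoint_family A"
    have "(\<lambda>xs. of_nat (npoints (A i) xs) :: ennreal) \<in> borel_measurable P" for i
      using measurable_npoints[of "A i" M] A(1) P by (simp cong: measurable_cong_sets)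
    then show "(\<Sum>i. \<integral>\<^sup>+ xs. of_nat (npoints (A i) xs) \<partial>P) = (\<integral>\<^sup>+ xs. of_nat (npoints (\<Union> (range A)) xs) \<partial>P)"
      by (simp add: nn_integral_suminf[symmetric] npoints_UN[OF A(2)])
  qed
qed

lemma intensity_iid_pp:
  assumes s: "s \<in> space (prob_algebra M)"
  shows "intensity M (iid_pp M (measure_pmf rho) s) = density s (\<lambda>_. \<Sum>m. ennreal (pmf rho m) * of_nat m)"
proof (rule measure_eqI)
  have "sets (intensity M (iid_pp M (measure_pmf rho) s)) = sets M"
    unfolding intensity_def by (simp add: sets_measure_of[OF sets.space_closed] sets.sigma_sets_eq)
  then show "sets (intensity M (iid_pp M (measure_pmf rho) s)) =
      sets (density s (\<lambda>_. \<Sum>m. ennreal (pmf rho m) * of_nat m))"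
    using prob_algebraD(2)[OF s] by simp
  fix A assume "A \<in> sets (intensity M (iid_pp M (measure_pmf rho) s))"
  with \<open>_ = sets M\<close> have A: "A \<in> sets M" by simp
  then show "emeasure (intensity M (iid_pp M (measure_pmf rho) s)) A =
      emeasure (density s (\<lambda>_. \<Sum>m. ennreal (pmf rho m) * of_nat m)) A"
    using prob_algebraD(2)[OF s] prob_algebraD(2)[OF iid_pp_in_prob_algebra[OF s]]
    by (simp add: emeasure_intensity nn_integral_iid_pp[OF s] nn_integral_npoints_iid_config[OF s]
        emeasure_density nn_integral_cmult_indicator mult.assoc[symmetric] ennreal_suminf_multc)
qed

lemma measurable_fps_nth_prod_list:
  assumes Q: "\<And>i. (\<lambda>x. fps_nth (Q x) i) \<in> borel_measurable M"
  shows "(\<lambda>xs. fps_nth (prod_list (map Q xs)) n :: ennreal) \<in> borel_measurable (listM M)"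
proof (rule measurable_from_listM)
  fix k
  have "set is \<subseteq> {..<k} \<Longrightarrow> (\<lambda>f. fps_nth (prod_list (map (\<lambda>i. Q (f i)) is)) n) \<in> borel_measurable (PiN k M)"
    for "is" n
  proof (induction "is" arbitrary: n)
    case (Cons i "is")
    have "(\<lambda>f. f i) \<in> PiN k M \<rightarrow>\<^sub>M M" using Cons.prems by (intro measurable_component_singleton) auto
    note [measurable] = measurable_compose[OF this Q] Cons.IH[OF subset_trans[OF _ Cons.prems]]
    have "(\<lambda>f. \<Sum>a=0..n. fps_nth (Q (f i)) a * fps_nth (prod_list (map (\<lambda>i. Q (f i)) is)) (n - a))
        \<in> borel_measurable (PiN k M)"
      by measurable auto
    then show ?case by (simp add: fps_mult_nth)
  qed simp
  from this[of "[0..<k]"]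
  show "(\<lambda>f. fps_nth (prod_list (map Q (map f [0..<k]))) n) \<in> borel_measurable (PiN k M)"
    by (simp add: comp_def atLeast0LessThan)
qed auto

lemma nn_integral_fps_nth_prod_list_iid_config:
  assumes s: "s \<in> space (prob_algebra M)" and Q: "\<And>i. (\<lambda>x. fps_nth (Q x) i) \<in> borel_measurable M"
  shows "(\<integral>\<^sup>+xs. fps_nth (prod_list (map Q xs)) n \<partial>iid_config M k s) =
    fps_nth (Abs_fps (\<lambda>i. \<integral>\<^sup>+x. fps_nth (Q x) i \<partial>s) ^ k) n"
proof (induction k arbitrary: n)
  case 0
  show ?case by (simp add: nn_integral_return[OF _ measurable_fps_nth_prod_list[OF Q]])
next
  case (Suc k)
  let ?C = "Abs_fps (\<lambda>i. \<integral>\<^sup>+x. fps_nth (Q x) i \<partial>s)"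
  have Q_s: "(\<lambda>x. fps_nth (Q x) a) \<in> borel_measurable s" for a
    using Q prob_algebraD(2)[OF s] by (simp cong: measurable_cong_sets)
  have "(\<integral>\<^sup>+xs. fps_nth (prod_list (map Q xs)) n \<partial>iid_config M (Suc k) s)
      = (\<integral>\<^sup>+y. \<integral>\<^sup>+xs. (\<Sum>a=0..n. fps_nth (prod_list (map Q xs)) a * fps_nth (Q y) (n - a)) \<partial>iid_config M k s \<partial>s)"
    by (subst nn_integral_iid_config_Suc[OF s measurable_fps_nth_prod_list[OF Q]]) (simp add: fps_mult_nth)
  also have "\<dots> = (\<integral>\<^sup>+y. (\<Sum>a=0..n. fps_nth (?C ^ k) a * fps_nth (Q y) (n - a)) \<partial>s)"
    using measurable_fps_nth_prod_list[OF Q]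
    by (intro nn_integral_cong) (simp add: nn_integral_sum nn_integral_multc Suc)
  also have "\<dots> = (\<Sum>a=0..n. fps_nth (?C ^ k) a * fps_nth ?C (n - a))"
    using Q_s by (simp add: nn_integral_sum nn_integral_cmult)
  also have "\<dots> = fps_nth (?C ^ Suc k) n"
    by (simp only: power_Suc2 fps_mult_nth)
  finally show ?case .
qed

section \<open>The prediction step\<close>

text \<open>offspring_weight p l i / i! is the probability that a Bernoulli(p) survival process together
  with an independent Poisson(l) spawning process produces exactly i points; it is the integrand
  defining b i.\<close>

definition offspring_weight :: "real \<Rightarrow> real \<Rightarrow> nat \<Rightarrow> real" where
  "offspring_weight p l i = (if i = 0 then (1 - p) * exp (- l)
     else l ^ (i - 1) * exp (- l) * ((1 - p) * l + real i * p))"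

lemma offspring_weight_nonneg:
  assumes "0 \<le> p" "p \<le> 1" "0 \<le> l" shows "0 \<le> offspring_weight p l i"
  using assms by (simp add: offspring_weight_def)

lemma offspring_weight_eq_convolution:
  "(1 - p) * poisson_prob l i + (if i = 0 then 0 else p * poisson_prob l (i - 1)) =
    offspring_weight p l i / fact i"
proof (cases i)
  case (Suc k)
  have "fact (Suc k) = fact k * (real (Suc k) :: real)" by simp
  with Suc show ?thesis
    by (simp add: offspring_weight_def poisson_prob_def field_simps del: fact_Suc of_nat_Suc)
qed (simp add: offspring_weight_def poisson_prob_def)

lemma sum_bernoulli_convolution:
  fixes u v :: "'a::comm_semiring_1" and i :: nat
  shows "(\<Sum>a=0..i. (if a = 0 then u else if a = 1 then v else 0) * g (i - a)) =
    u * g i + (if i = 0 then 0 else v * g (i - 1))"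
proof (cases i)
  case (Suc k)
  have "(\<Sum>a=0..Suc k. (if a = 0 then u else if a = 1 then v else 0) * g (Suc k - a)) =
      u * g (Suc k) + (v * g k + (\<Sum>a=Suc (Suc 0)..Suc k. (if a = 0 then u else if a = 1 then v else 0) * g (Suc k - a)))"
    by (simp add: sum.atLeast_Suc_atMost)
  also have "(\<Sum>a=Suc (Suc 0)..Suc k. (if a = 0 then u else if a = 1 then v else 0) * g (Suc k - a)) = 0"
    by (intro sum.neutral) auto
  finally show ?thesis using Suc by simp
qed simp

locale prediction_model =
  fixes M :: "'a measure" and ps lb :: "'a \<Rightarrow> real" and fs sb :: "'a \<Rightarrow> 'a measure"
  assumes ps_measurable: "ps \<in> borel_measurable M"
    and ps_range: "\<And>x. x \<in> space M \<Longrightarrow> 0 \<le> ps x \<and> ps x \<le> 1"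
    and fs_kernel: "fs \<in> M \<rightarrow>\<^sub>M prob_algebra M"
    and lb_measurable: "lb \<in> borel_measurable M"
    and lb_nonneg: "\<And>x. x \<in> space M \<Longrightarrow> 0 \<le> lb x"
    and sb_kernel: "sb \<in> M \<rightarrow>\<^sub>M prob_algebra M"
    and space_nonempty: "space M \<noteq> {}"
begin

definition target_pp :: "'a \<Rightarrow> 'a list measure" where
  "target_pp x = superpose M (bernoulli_pp M (ps x) (fs x)) (poisson_pp M (lb x) (sb x))"

definition offspring_pp :: "'a list \<Rightarrow> 'a list measure" where
  "offspring_pp xs = superpose_list M (map target_pp xs)"

definition offspring_mean :: "'a set \<Rightarrow> 'a \<Rightarrow> ennreal" where
  "offspring_mean B x = ennreal (ps x) * emeasure (fs x) B + ennreal (lb x) * emeasure (sb x) B"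

lemma predicted_pp_eq_bind: "predicted_pp M ps fs lb sb Phi = Phi \<bind> offspring_pp"
  unfolding predicted_pp_def offspring_pp_def target_pp_def ..

lemma measurable_target_pp: "target_pp \<in> M \<rightarrow>\<^sub>M prob_algebra (listM M)"
  unfolding target_pp_def[abs_def]
  by (intro measurable_superpose measurable_bernoulli_pp measurable_poisson_pp ps_measurable
      fs_kernel lb_measurable sb_kernel space_nonempty ps_range lb_nonneg)

lemma measurable_offspring_pp: "offspring_pp \<in> listM M \<rightarrow>\<^sub>M prob_algebra (listM M)"
  unfolding offspring_pp_def[abs_def] by (rule measurable_superpose_list[OF measurable_target_pp space_nonempty])

lemma kernels_in_prob_algebra:
  assumes "x \<in> space M"
  shows "fs x \<in> space (prob_algebra M)" "sb x \<in> space (prob_algebra M)"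
    and "target_pp x \<in> space (prob_algebra (listM M))"
  using measurable_space[OF fs_kernel assms] measurable_space[OF sb_kernel assms]
    measurable_space[OF measurable_target_pp assms] by auto

lemma measurable_offspring_mean:
  assumes "B \<in> sets M" shows "offspring_mean B \<in> borel_measurable M"
proof -
  note [measurable] = ps_measurable lb_measurable
    measurable_emeasure_kernel[OF measurable_prob_algebraD[OF fs_kernel] assms]
    measurable_emeasure_kernel[OF measurable_prob_algebraD[OF sb_kernel] assms]
  show ?thesis unfolding offspring_mean_def[abs_def] by measurable
qed

lemma nn_integral_npoints_offspring_pp:
  assumes xs: "xs \<in> lists (space M)" and B: "B \<in> sets M"
  shows "(\<integral>\<^sup>+ys. of_nat (npoints B ys) \<partial>offspring_pp xs) = (\<Sum>x\<leftarrow>xs. offspring_mean B x)"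
proof -
  have target: "(\<integral>\<^sup>+ys. of_nat (npoints B ys) \<partial>target_pp x) = offspring_mean B x" if "x \<in> space M" for x
    unfolding target_pp_def offspring_mean_def
    using that kernels_in_prob_algebra[OF that] ps_range[OF that] lb_nonneg[OF that] B
      measurable_space[OF measurable_bernoulli_pp[OF ps_measurable ps_range fs_kernel] that]
      measurable_space[OF measurable_poisson_pp[OF lb_measurable lb_nonneg sb_kernel space_nonempty] that]
    by (simp add: nn_integral_npoints_superpose space_nonempty nn_integral_npoints_bernoulli_pp
        nn_integral_npoints_poisson_pp)
  show ?thesis
    unfolding offspring_pp_def
    using xs kernels_in_prob_algebra(3) B
    by (subst nn_integral_npoints_superpose_list[OF _ space_nonempty B])
       (auto simp: target intro!: arg_cong[where f=sum_list])
qed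

lemma card_prob_target_pp:
  assumes x: "x \<in> space M"
  shows "card_prob M (target_pp x) i = ennreal (offspring_weight (ps x) (lb x) i / fact i)"
proof -
  have p: "0 \<le> ps x" "ps x \<le> 1" and l: "0 \<le> lb x" using ps_range[OF x] lb_nonneg[OF x] by auto
  have "card_prob M (target_pp x) i =
      (\<Sum>a=0..i. card_prob M (bernoulli_pp M (ps x) (fs x)) a * card_prob M (poisson_pp M (lb x) (sb x)) (i - a))"
    unfolding target_pp_def using kernels_in_prob_algebra[OF x]
      measurable_space[OF measurable_bernoulli_pp[OF ps_measurable ps_range fs_kernel] x]
      measurable_space[OF measurable_poisson_pp[OF lb_measurable lb_nonneg sb_kernel space_nonempty] x]
    by (intro card_prob_superpose space_nonempty) auto
  also have "\<dots> = ennreal (1 - ps x) * ennreal (poisson_prob (lb x) i) +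
      (if i = 0 then 0 else ennreal (ps x) * ennreal (poisson_prob (lb x) (i - 1)))"
    unfolding card_prob_bernoulli_pp[OF kernels_in_prob_algebra(1)[OF x] p]
      card_prob_poisson_pp[OF kernels_in_prob_algebra(2)[OF x] l]
    by (rule sum_bernoulli_convolution)
  also have "\<dots> = ennreal ((1 - ps x) * poisson_prob (lb x) i +
      (if i = 0 then 0 else ps x * poisson_prob (lb x) (i - 1)))"
    using p poisson_prob_nonneg[OF l] by (simp add: ennreal_plus ennreal_mult)
  also have "\<dots> = ennreal (offspring_weight (ps x) (lb x) i / fact i)"
    by (simp only: offspring_weight_eq_convolution)
  finally show ?thesis .
qed

lemma nn_integral_card_prob_target_pp:
  assumes s: "s \<in> space (prob_algebra M)"
  shows "(\<integral>\<^sup>+x. card_prob M (target_pp x) i \<partial>s) =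
    ennreal (integral\<^sup>L s (\<lambda>x. offspring_weight (ps x) (lb x) i) / fact i)"
proof -
  interpret s: prob_space s using prob_algebraD(1)[OF s] .
  have space_s: "space s = space M" using sets_eq_imp_space_eq[OF prob_algebraD(2)[OF s]] .
  define w where "w x = offspring_weight (ps x) (lb x) i / fact i" for x
  have w_nonneg: "0 \<le> w x" if "x \<in> space M" for x
    using ps_range[OF that] lb_nonneg[OF that] by (simp add: w_def offspring_weight_nonneg)
  have w_le_1: "w x \<le> 1" if "x \<in> space M" for x
    using card_prob_le_1[OF kernels_in_prob_algebra(3)[OF that], of i] w_nonneg[OF that]
    by (simp add: card_prob_target_pp[OF that] w_def)
  have w_meas: "w \<in> borel_measurable s"
    using ps_measurable lb_measurable prob_algebraD(2)[OF s]
    unfolding w_def[abs_def] offspring_weight_def by (simp cong: measurable_cong_sets)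
  have "(\<integral>\<^sup>+x. card_prob M (target_pp x) i \<partial>s) = (\<integral>\<^sup>+x. ennreal (w x) \<partial>s)"
    by (intro nn_integral_cong) (simp add: space_s card_prob_target_pp w_def)
  also have "\<dots> = ennreal (integral\<^sup>L s w)"
    using w_nonneg w_le_1 space_s
    by (intro nn_integral_eq_integral s.integrable_const_bound[where B=1] AE_I2 w_meas) auto
  finally show ?thesis by (simp add: w_def[abs_def])
qed

lemma intensity_bind_offspring_pp:
  assumes s: "s \<in> space (prob_algebra M)" and B: "B \<in> sets M"
  shows "emeasure (intensity M (iid_pp M (measure_pmf rho) s \<bind> offspring_pp)) B =
    (\<integral>\<^sup>+x. offspring_mean B x \<partial>intensity M (iid_pp M (measure_pmf rho) s))"
proof -
  let ?Phi = "iid_pp M (measure_pmf rho) s" and ?C = "\<Sum>m. ennreal (pmf rho m) * of_nat m"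
  note Phi = iid_pp_in_prob_algebra[OF s, of rho]
  have mean_s: "offspring_mean B \<in> borel_measurable s"
    using measurable_offspring_mean[OF B] prob_algebraD(2)[OF s] by (simp cong: measurable_cong_sets)
  have "emeasure (intensity M (?Phi \<bind> offspring_pp)) B = (\<integral>\<^sup>+ys. of_nat (npoints B ys) \<partial>(?Phi \<bind> offspring_pp))"
    by (rule emeasure_intensity[OF sets_bind'[OF Phi measurable_offspring_pp] B])
  also have "\<dots> = (\<integral>\<^sup>+xs. \<integral>\<^sup>+ys. of_nat (npoints B ys) \<partial>offspring_pp xs \<partial>?Phi)"
    using measurable_prob_algebraD[OF measurable_offspring_pp] prob_algebraD(2)[OF Phi]
    by (intro nn_integral_bind[OF measurable_npoints[OF B]]) (simp cong: measurable_cong_sets)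
  also have "\<dots> = (\<integral>\<^sup>+xs. (\<Sum>x\<leftarrow>xs. offspring_mean B x) \<partial>?Phi)"
    using sets_eq_imp_space_eq[OF prob_algebraD(2)[OF Phi]]
    by (intro nn_integral_cong) (simp add: nn_integral_npoints_offspring_pp B)
  also have "\<dots> = (\<integral>\<^sup>+x. ?C * offspring_mean B x \<partial>s)"
    by (simp add: nn_integral_sum_list_iid_pp[OF s measurable_offspring_mean[OF B]] nn_integral_cmult[OF mean_s])
  also have "\<dots> = (\<integral>\<^sup>+x. offspring_mean B x \<partial>intensity M ?Phi)"
    unfolding intensity_iid_pp[OF s] using mean_s by (simp add: nn_integral_density)
  finally show ?thesis .
qed

lemma integral_offspring_weight_nonneg:
  assumes "s \<in> space (prob_algebra M)"
  shows "0 \<le> integral\<^sup>L s (\<lambda>x. offspring_weight (ps x) (lb x) i)"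
  using ps_range lb_nonneg sets_eq_imp_space_eq[OF prob_algebraD(2)[OF assms]]
  by (auto intro!: integral_nonneg_AE AE_I2 offspring_weight_nonneg)

lemma card_prob_offspring_pp:
  assumes "xs \<in> lists (space M)"
  shows "card_prob M (offspring_pp xs) n = fps_nth (\<Prod>x\<leftarrow>xs. card_fps M (target_pp x)) n"
proof -
  have "set (map target_pp xs) \<subseteq> space (prob_algebra (listM M))"
    using assms kernels_in_prob_algebra(3) by auto
  then show ?thesis
    using card_fps_superpose_list[OF _ space_nonempty, of "map target_pp xs"]
    by (simp add: offspring_pp_def comp_def flip: fps_nth_card_fps)
qed

lemma card_prob_bind_offspring_pp:
  assumes s: "s \<in> space (prob_algebra M)"
  defines "c \<equiv> \<lambda>i. integral\<^sup>L s (\<lambda>x. offspring_weight (ps x) (lb x) i) / fact i"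
  shows "card_prob M (iid_pp M (measure_pmf rho) s \<bind> offspring_pp) n =
    (\<Sum>m. ennreal (pmf rho m) * ennreal (fps_nth (Abs_fps c ^ m) n))"
proof -
  let ?Phi = "iid_pp M (measure_pmf rho) s" and ?Q = "\<lambda>x. card_fps M (target_pp x)"
  note Phi = iid_pp_in_prob_algebra[OF s, of rho]
  have Q_meas: "(\<lambda>x. fps_nth (?Q x) i) \<in> borel_measurable M" for i
    using measurable_emeasure_kernel[OF measurable_prob_algebraD[OF measurable_target_pp] sets_length_eq_listM]
    by (simp add: card_prob_def)
  have c_nonneg: "0 \<le> c i" for i
    using integral_offspring_weight_nonneg[OF s] by (simp add: c_def)
  have "card_prob M (?Phi \<bind> offspring_pp) n = (\<integral>\<^sup>+xs. card_prob M (offspring_pp xs) n \<partial>?Phi)"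
    unfolding card_prob_def by (rule emeasure_bind_prob_algebra[OF Phi measurable_offspring_pp sets_length_eq_listM])
  also have "\<dots> = (\<integral>\<^sup>+xs. fps_nth (prod_list (map ?Q xs)) n \<partial>?Phi)"
    using sets_eq_imp_space_eq[OF prob_algebraD(2)[OF Phi]]
    by (intro nn_integral_cong) (simp add: card_prob_offspring_pp)
  also have "\<dots> = (\<Sum>m. ennreal (pmf rho m) * fps_nth (Abs_fps (\<lambda>i. \<integral>\<^sup>+x. fps_nth (?Q x) i \<partial>s) ^ m) n)"
    by (simp only: nn_integral_iid_pp[OF s measurable_fps_nth_prod_list[OF Q_meas]]
        nn_integral_fps_nth_prod_list_iid_config[OF s Q_meas])
  also have "Abs_fps (\<lambda>i. \<integral>\<^sup>+x. fps_nth (?Q x) i \<partial>s) = Abs_fps (\<lambda>i. ennreal (c i))"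
    by (simp add: nn_integral_card_prob_target_pp[OF s] c_def)
  finally show ?thesis by (simp only: fps_nth_power_ennreal[OF c_nonneg])
qed

lemma card_dist_bind_offspring_pp:
  assumes s: "s \<in> space (prob_algebra M)"
  defines "b \<equiv> \<lambda>i. integral\<^sup>L s (\<lambda>x. offspring_weight (ps x) (lb x) i)"
  shows "card_dist M (iid_pp M (measure_pmf rho) s \<bind> offspring_pp) n = (\<Sum>j\<le>n. partial_bell n j b *
      (\<Sum>m. if j \<le> m then fact m / (fact n * fact (m - j)) * pmf rho m * b 0 ^ (m - j) else 0))"
proof (rule power_egf_mixture_eq_bell_sum)
  let ?P = "iid_pp M (measure_pmf rho) s \<bind> offspring_pp"
  interpret P: prob_space ?P
    by (rule prob_space_bind'[OF iid_pp_in_prob_algebra[OF s] measurable_offspring_pp])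
  show b_nonneg: "0 \<le> b i" for i
    unfolding b_def by (rule integral_offspring_weight_nonneg[OF s])
  have coeff_nonneg: "0 \<le> fps_nth (Abs_fps (\<lambda>i. b i / fact i) ^ m) n" for m
    using b_nonneg by (intro fps_nth_power_nonneg) simp
  have "ennreal (card_dist M ?P n) = card_prob M ?P n"
    by (simp add: card_dist_def card_prob_def P.emeasure_eq_measure)
  also have "\<dots> = (\<Sum>m. ennreal (pmf rho m * fps_nth (Abs_fps (\<lambda>i. b i / fact i) ^ m) n))"
    using coeff_nonneg by (simp add: card_prob_bind_offspring_pp[OF s] b_def ennreal_mult)
  finally show "(\<lambda>m. pmf rho m * fps_nth (Abs_fps (\<lambda>i. b i / fact i) ^ m) n) sums card_dist M ?P n"
    using coeff_nonneg by (intro sums_of_ennreal_suminf) (simp_all add: card_dist_def)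
qed

end

theorem theorem1:
  fixes X :: "'a::euclidean_space set"
    and rho :: "nat pmf"
    and s :: "'a measure"
    and ps lb :: "'a \<Rightarrow> real"
    and fs sb :: "'a \<Rightarrow> 'a measure"
  defines "M \<equiv> restrict_space borel X"
  defines "Phi_prev \<equiv> iid_pp M (measure_pmf rho) s"
  defines "Phi_pred \<equiv> predicted_pp M ps fs lb sb Phi_prev"
  defines "b \<equiv> (\<lambda>i::nat. if i = 0
              then integral\<^sup>L s (\<lambda>x. (1 - ps x) * exp (- lb x))
              else integral\<^sup>L s (\<lambda>x. lb x ^ (i - 1) * exp (- lb x)
                                       * ((1 - ps x) * lb x + real i * ps x)))"
  assumes s_prob: "prob_space s" and s_sets: "sets s = sets M"
    and ps_meas: "ps \<in> borel_measurable M" and ps_range: "\<And>x. x \<in> X \<Longrightarrow> 0 \<le> ps x \<and> ps x \<le> 1"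
    and fs_kernel: "fs \<in> M \<rightarrow>\<^sub>M prob_algebra M"
    and lb_meas: "lb \<in> borel_measurable M" and lb_nonneg: "\<And>x. x \<in> X \<Longrightarrow> 0 \<le> lb x"
    and sb_kernel: "sb \<in> M \<rightarrow>\<^sub>M prob_algebra M"
  shows "(\<forall>B \<in> sets M. emeasure (intensity M Phi_pred) B =
            (\<integral>\<^sup>+ x. (ennreal (ps x) * emeasure (fs x) B + ennreal (lb x) * emeasure (sb x) B)
               \<partial>(intensity M Phi_prev)))
       \<and> (\<forall>n. card_dist M Phi_pred n =
            (\<Sum>j\<le>n. partial_bell n j b *
               (\<Sum>m. if j \<le> m then fact m / (fact n * fact (m - j)) * pmf rho m * b 0 ^ (m - j)
                     else 0)))"
proof -
  have s: "s \<in> space (prob_algebra M)" using s_prob s_sets by (simp add: space_prob_algebra)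
  interpret prediction_model M ps lb fs sb
    using ps_meas ps_range fs_kernel lb_meas lb_nonneg sb_kernel space_nonempty_of_prob_algebra[OF s]
    by unfold_locales (auto simp: M_def space_restrict_space)
  have pred: "Phi_pred = Phi_prev \<bind> offspring_pp"
    unfolding Phi_pred_def by (rule predicted_pp_eq_bind)
  have b: "b = (\<lambda>i. integral\<^sup>L s (\<lambda>x. offspring_weight (ps x) (lb x) i))"
    by (simp add: b_def offspring_weight_def fun_eq_iff)
  show ?thesis
    unfolding pred Phi_prev_def b
    using intensity_bind_offspring_pp[OF s] card_dist_bind_offspring_pp[OF s]
    by (simp add: offspring_mean_def)
qed

end
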